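(* Fix a noise variance $\sigma_W^2>0$, a prior mean $\mu\in\mathbb{R}$ and a prior variance $\sigma^2>0$, and let $\lambda_\gamma(\mu,\sigma^2)$ denote the Gittins index defined in the context below. Then \[ \lambda_{\gamma}(\mu,\sigma^2) = \mu + \Phi^{-1}(\gamma)\,\sigma + o(1) \quad \text{as } \gamma \to 1, \] where $\Phi$ is the CDF of the standard normal distribution.
   Context: One-armed Gaussian bandit: the arm has unknown quality $\theta\sim N(\mu,\sigma^2)$ (the prior), and conditional on $\theta$ the rewards $R_0,R_1,R_2,\ldots$ are i.i.d. $N(\theta,\sigma_W^2)$, where $\sigma_W^2>0$ is a fixed noise variance. Let $\mathcal{H}_t$ be the $\sigma$-algebra generated by $R_0,\ldots,R_{t-1}$ ($\mathcal{H}_0$ trivial). For a discount factor $\gamma\in(0,1)$ and a tax $\lambda\in\mathbb{R}$, define \[ V_\gamma^\lambda(\mu,\sigma)=\sup_{\tau\ge 1}\mathbb{E}\Big[\sum_{t=0}^{\tau}\gamma^t(\theta-\lambda)\Big], \] where the supremum is over stopping times $\tau\ge 1$ (possibly infinite) with respect to the filtration $(\mathcal{H}_t)_{t\ge0}$ generated by the rewards, and the expectation is under the model above with prior $N(\mu,\sigma^2)$. The Gittins index is \[ \lambda_\gamma(\mu,\sigma^2)=\sup\{\lambda\in\mathbb{R} : V_\gamma^\lambda(\mu,\sigma)\ge 0\}. \] *)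

theory Defs
  imports "HOL-Probability.Probability"
begin

text \<open>Underlying probability space: \<omega> = (\<theta>, W) where \<theta> ~ N(\<mu>, \<sigma>^2) and
  W_0, W_1, ... are i.i.d.  Here \<sigma> and \<sigma>W are
  standard deviations (the prior variance is \<sigma>^2, the noise variance is \<sigma>W^2).\<close>

definition bandit_space :: "real \<Rightarrow> real \<Rightarrow> (real \<times> (nat \<Rightarrow> real)) measure" where
  "bandit_space \<mu> \<sigma> =
     density lborel (normal_density \<mu> \<sigma>) \<Otimes>\<^sub>M
     (\<Pi>\<^sub>M i\<in>(UNIV::nat set). density lborel std_normal_density)"

text \<open>Arm quality and rewards R_t = \<theta> + \<sigma>W * W_t, so that given \<theta> the
  rewards are i.i.d. N(\<theta>, \<sigma>W^2).\<close>

definition quality :: "real \<times> (nat \<Rightarrow> real) \<Rightarrow> real" where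
  "quality \<omega> = fst \<omega>"

definition reward :: "real \<Rightarrow> nat \<Rightarrow> real \<times> (nat \<Rightarrow> real) \<Rightarrow> real" where
  "reward \<sigma>W t \<omega> = fst \<omega> + \<sigma>W * snd \<omega> t"

text \<open>Filtration H_t = \<sigma>(R_0, ..., R_{t-1}), indexed by extended naturals
  (H_\<infinity> is generated by all rewards) so that stopping times may be infinite.\<close>

definition reward_filtration ::
  "real \<Rightarrow> real \<Rightarrow> real \<Rightarrow> enat \<Rightarrow> (real \<times> (nat \<Rightarrow> real)) measure" where
  "reward_filtration \<sigma>W \<mu> \<sigma> t =
     vimage_algebra (space (bandit_space \<mu> \<sigma>))
       (\<lambda>\<omega>. \<lambda>i\<in>{i. enat i < t}. reward \<sigma>W i \<omega>)
       (\<Pi>\<^sub>M i\<in>{i. enat i < t}. (borel :: real measure))"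

definition admissible_stopping_times ::
  "real \<Rightarrow> real \<Rightarrow> real \<Rightarrow> (real \<times> (nat \<Rightarrow> real) \<Rightarrow> enat) set" where
  "admissible_stopping_times \<sigma>W \<mu> \<sigma> =
     {\<tau>. stopping_time (reward_filtration \<sigma>W \<mu> \<sigma>) \<tau> \<and>
          (\<forall>\<omega>\<in>space (bandit_space \<mu> \<sigma>). 1 \<le> \<tau> \<omega>)}"

definition stop_payoff ::
  "real \<Rightarrow> real \<Rightarrow> real \<Rightarrow> real \<Rightarrow> real \<Rightarrow> (real \<times> (nat \<Rightarrow> real) \<Rightarrow> enat) \<Rightarrow> real" where
  "stop_payoff \<sigma>W \<mu> \<sigma> \<gamma> lam \<tau> =
     (\<integral>\<omega>. (\<Sum>t. if enat t \<le> \<tau> \<omega> then \<gamma> ^ t * (quality \<omega> - lam) else 0)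
        \<partial>bandit_space \<mu> \<sigma>)"

definition value_fun :: "real \<Rightarrow> real \<Rightarrow> real \<Rightarrow> real \<Rightarrow> real \<Rightarrow> real" where
  "value_fun \<sigma>W \<gamma> lam \<mu> \<sigma> =
     (SUP \<tau>\<in>admissible_stopping_times \<sigma>W \<mu> \<sigma>. stop_payoff \<sigma>W \<mu> \<sigma> \<gamma> lam \<tau>)"

definition gittins_index :: "real \<Rightarrow> real \<Rightarrow> real \<Rightarrow> real \<Rightarrow> real" where
  "gittins_index \<sigma>W \<gamma> \<mu> \<sigma> = Sup {lam. value_fun \<sigma>W \<gamma> lam \<mu> \<sigma> \<ge> 0}"

definition Phi :: "real \<Rightarrow> real" where
  "Phi x = measure (density lborel std_normal_density) {..x}"

definition Phi_inv :: "real \<Rightarrow> real" where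
  "Phi_inv p = (THE x. Phi x = p)"

end

theory Submission
  imports Defs "HOL-Real_Asymp.Real_Asymp"
begin

(* Write c = Phi_inv gamma, so that 1 - gamma = Q(c) ~ phi(c)/c for the standard normal tail Q.

   Upper bound: every stopping time tau >= 1 earns the first two discounted terms
   (1 + gamma)(theta - lambda) and afterwards at most gamma^2/(1 - gamma) times the positive part
   of theta - lambda.  For lambda = mu + c' sigma with c' >= c the Mills-ratio bounds make
   E (theta - lambda)^+ = sigma (phi(c') - c' Q(c')) <= sigma phi(c)/4 too small to pay for the first
   two terms, so the value is negative and the index is at most mu + c sigma.

   Lower bound: for lambda = mu + (c - eps) sigma, observe n ~ c^2 rewards and keep pulling forever
   iff their mean is at least lambda + eps sigma/4.  Arms with theta > mu + (c - eps/2) sigma are kept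
   with probability >= 1/2 and yield a gain of order phi(c - eps/2) eps/c, while the cost of sampling
   and of wrongly kept bad arms is of order n phi(c); the factor exp(eps c/2) between the two makes
   the value nonnegative once c is large, so the index is at least mu + (c - eps) sigma. *)

section \<open>The standard normal tail\<close>

lemma std_normal_density_has_real_derivative:
  "(std_normal_density has_real_derivative (- x * std_normal_density x)) (at x)"
  unfolding std_normal_density_def[abs_def]
  by (auto intro!: derivative_eq_intros simp: power2_eq_square field_simps)

lemma std_normal_density_antimono:
  assumes "0 \<le> a" "a \<le> b"
  shows "std_normal_density b \<le> std_normal_density a"
proof -
  have "a\<^sup>2 \<le> b\<^sup>2" using assms by (intro power_mono) auto
  then show ?thesis unfolding std_normal_density_def by (auto intro!: divide_right_mono)
qed

lemma std_normal_density_le_half: "std_normal_density x \<le> 1/2"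
proof -
  have "2 \<le> sqrt (2 * pi)"
    using pi_gt3 by (simp add: real_le_rsqrt)
  then have "1 / sqrt (2 * pi) \<le> 1 / 2" by (intro divide_left_mono) auto
  moreover have "exp (- x\<^sup>2 / 2) \<le> 1" by simp
  ultimately have "(1 / sqrt (2 * pi)) * exp (- x\<^sup>2 / 2) \<le> (1/2) * 1"
    by (intro mult_mono) auto
  then show ?thesis unfolding std_normal_density_def by simp
qed

lemma std_normal_density_diff:
  "std_normal_density (c - k) = std_normal_density c * exp (k * c) * exp (- k\<^sup>2 / 2)"
  unfolding std_normal_density_def
  by (simp add: mult_exp_exp power2_eq_square field_simps)

lemma std_normal_density_add_1:
  "std_normal_density (c + 1) = std_normal_density c * exp (- c - 1/2)"
  unfolding std_normal_density_def
  by (simp add: mult_exp_exp power2_eq_square field_simps)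

lemma set_integral_Ioi_FTC_nonneg:
  fixes F f :: "real \<Rightarrow> real"
  assumes F: "\<And>x. y < x \<Longrightarrow> (F has_real_derivative f x) (at x)"
    and f: "\<And>x. y < x \<Longrightarrow> isCont f x" "\<And>x. y < x \<Longrightarrow> 0 \<le> f x"
    and F_y: "isCont F y" and F_top: "(F \<longlongrightarrow> 0) at_top"
  shows "set_integrable lborel {y<..} f" and "(LBINT x:{y<..}. f x) = - F y"
proof -
  have A: "((F \<circ> real_of_ereal) \<longlongrightarrow> F y) (at_right (ereal y))"
    using F_y unfolding ereal_tendsto_simps by (simp add: isCont_def filterlim_at_split)
  have B: "((F \<circ> real_of_ereal) \<longlongrightarrow> 0) (at_left \<infinity>)"
    unfolding ereal_tendsto_simps by (rule F_top)
  have "\<And>x. ereal y < ereal x \<Longrightarrow> ereal x < \<infinity> \<Longrightarrow> (F has_real_derivative f x) (at x)"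
    "\<And>x. ereal y < ereal x \<Longrightarrow> ereal x < \<infinity> \<Longrightarrow> isCont f x"
    "AE x in lborel. ereal y < ereal x \<longrightarrow> ereal x < \<infinity> \<longrightarrow> 0 \<le> f x"
    using F f by auto
  note R = interval_integral_FTC_nonneg[of "ereal y" \<infinity> F f, OF _ this A B]
  show "set_integrable lborel {y<..} f" and "(LBINT x:{y<..}. f x) = - F y"
    using R by (simp_all add: interval_integral_to_infinity_eq)
qed

lemma std_normal_first_moment_tail:
  assumes "0 \<le> y"
  shows "set_integrable lborel {y<..} (\<lambda>z. z * std_normal_density z)"
    and "(LBINT z:{y<..}. z * std_normal_density z) = std_normal_density y"
proof -
  have "((\<lambda>z. - std_normal_density z) has_real_derivative x * std_normal_density x) (at x)" for x
    using std_normal_density_has_real_derivative by (auto intro!: derivative_eq_intros)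
  moreover have "isCont (\<lambda>z. z * std_normal_density z) x" for x
    unfolding std_normal_density_def by (auto intro!: continuous_intros)
  moreover have "0 \<le> x * std_normal_density x" if "y < x" for x
    using that assms by simp
  moreover have "isCont (\<lambda>z. - std_normal_density z) y"
    unfolding std_normal_density_def by (auto intro!: continuous_intros)
  moreover have "((\<lambda>z. - std_normal_density z) \<longlongrightarrow> 0) at_top"
    unfolding std_normal_density_def by real_asymp
  ultimately show "set_integrable lborel {y<..} (\<lambda>z. z * std_normal_density z)"
    and "(LBINT z:{y<..}. z * std_normal_density z) = std_normal_density y"
    using set_integral_Ioi_FTC_nonneg[of y "\<lambda>z. - std_normal_density z"] by simp_all
qed

definition std_normal_tail :: "real \<Rightarrow> real" where
  "std_normal_tail y = measure (density lborel std_normal_density) {y<..}"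

lemma prob_space_std_normal: "prob_space (density lborel std_normal_density)"
  by (rule prob_space_normal_density) simp

lemma Phi_add_std_normal_tail: "Phi y + std_normal_tail y = 1"
proof -
  interpret P: prob_space "density lborel std_normal_density" by (rule prob_space_std_normal)
  have "std_normal_tail y = P.prob (space (density lborel std_normal_density) - {..y})"
    unfolding std_normal_tail_def by (intro arg_cong[where f="P.prob"]) auto
  also have "\<dots> = 1 - Phi y" unfolding Phi_def by (subst P.prob_compl) auto
  finally show ?thesis by simp
qed

lemma set_integrable_std_normal_density:
  "A \<in> sets borel \<Longrightarrow> set_integrable lborel A std_normal_density"
  unfolding set_integrable_def by (intro integrable_mult_indicator) auto

lemma std_normal_tail_eq_integral: "std_normal_tail y = (LBINT z:{y<..}. std_normal_density z)"
  unfolding std_normal_tail_def set_lebesgue_integral_def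
  by (simp add: integral_real_density[symmetric] mult.commute)

lemma std_normal_tail_nonneg: "0 \<le> std_normal_tail y"
  unfolding std_normal_tail_def by simp

lemma std_normal_tail_le:
  assumes "0 < y"
  shows "std_normal_tail y \<le> std_normal_density y / y"
proof -
  have "std_normal_tail y \<le> (LBINT z:{y<..}. (1/y) * (z * std_normal_density z))"
    unfolding std_normal_tail_eq_integral
  proof (rule set_integral_mono)
    show "set_integrable lborel {y<..} std_normal_density"
      by (rule set_integrable_std_normal_density) auto
    show "set_integrable lborel {y<..} (\<lambda>z. (1/y) * (z * std_normal_density z))"
      using std_normal_first_moment_tail(1)[of y] assms by auto
    fix z assume "z \<in> {y<..}"
    then show "std_normal_density z \<le> (1/y) * (z * std_normal_density z)"
      using assms by (auto simp: field_simps intro!: mult_right_mono)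
  qed
  also have "\<dots> = std_normal_density y / y"
    using std_normal_first_moment_tail(2)[of y] assms by simp
  finally show ?thesis .
qed

lemma std_normal_tail_le_density:
  assumes "1 \<le> t" "0 \<le> a" "a \<le> t"
  shows "std_normal_tail t \<le> std_normal_density a"
proof -
  have "std_normal_tail t \<le> std_normal_density t / t" using std_normal_tail_le[of t] assms by simp
  also have "\<dots> \<le> std_normal_density t" using assms by (intro divide_left_mono[of 1, simplified]) auto
  also have "\<dots> \<le> std_normal_density a" using assms by (intro std_normal_density_antimono) auto
  finally show ?thesis .
qed

lemma std_normal_tail_ge:
  assumes "2 \<le> y"
  shows "(1/y - 1/y^3) * std_normal_density y \<le> std_normal_tail y"
proof -
  define F where "F = (\<lambda>z::real. - ((1/z - 1/z^3) * std_normal_density z))"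
  define f where "f = (\<lambda>z::real. (1 - 3/z^4) * std_normal_density z)"
  have "(F has_real_derivative f x) (at x)" if "y < x" for x
  proof -
    have x: "0 < x" using that assms by simp
    have "(F has_real_derivative - ((- 1/x^2 + 3/x^4) * std_normal_density x
        + (- x * std_normal_density x) * (1/x - 1/x^3))) (at x)"
      unfolding F_def using x
      by (auto intro!: derivative_eq_intros std_normal_density_has_real_derivative
          simp: field_simps power2_eq_square power3_eq_cube power4_eq_xxxx)
    moreover have "- ((- 1/x^2 + 3/x^4) * std_normal_density x
        + (- x * std_normal_density x) * (1/x - 1/x^3)) = f x"
      unfolding f_def using x by (simp add: field_simps power2_eq_square power3_eq_cube power4_eq_xxxx)
    ultimately show ?thesis by simp
  qed
  moreover have "isCont f x" if "y < x" for x
    unfolding f_def std_normal_density_def using that assms by (auto intro!: continuous_intros)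
  moreover have "0 \<le> f x" if "y < x" for x
  proof -
    have "(2::real)^4 \<le> x^4" using that assms by (intro power_mono) auto
    then have "3 / x^4 \<le> 1" using that assms by (simp add: field_simps)
    then show "0 \<le> f x" unfolding f_def by simp
  qed
  moreover have "isCont F y"
    unfolding F_def std_normal_density_def using assms by (auto intro!: continuous_intros)
  moreover have "(F \<longlongrightarrow> 0) at_top"
    unfolding F_def std_normal_density_def by real_asymp
  ultimately have f_int: "set_integrable lborel {y<..} f" and f_eq: "(LBINT z:{y<..}. f z) = - F y"
    using set_integral_Ioi_FTC_nonneg[of y F f] by simp_all
  have "(LBINT z:{y<..}. f z) \<le> (LBINT z:{y<..}. std_normal_density z)"
  proof (rule set_integral_mono[OF f_int])
    show "set_integrable lborel {y<..} std_normal_density"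
      by (rule set_integrable_std_normal_density) auto
    fix z
    have "0 \<le> 3/z^4 * std_normal_density z" by simp
    then show "f z \<le> std_normal_density z" unfolding f_def by (simp add: algebra_simps)
  qed
  then show ?thesis using f_eq by (simp add: std_normal_tail_eq_integral F_def)
qed

lemma std_normal_tail_ge_Mills:
  assumes "2 \<le> c"
  shows "3/4 * std_normal_density c / c \<le> std_normal_tail c"
proof -
  have "4 \<le> c\<^sup>2" using assms power_mono[of 2 c 2] by simp
  then have "3/4 / c \<le> 1/c - 1/c^3"
    using assms by (simp add: field_simps power2_eq_square power3_eq_cube)
  then have "3/4 / c * std_normal_density c \<le> (1/c - 1/c^3) * std_normal_density c"
    by (intro mult_right_mono) auto
  then show ?thesis using std_normal_tail_ge[OF assms] by simp
qed

lemma std_normal_density_minus_tail_le: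
  assumes "2 \<le> c"
  shows "std_normal_density c - c * std_normal_tail c \<le> std_normal_density c / c\<^sup>2"
proof -
  have "c * ((1/c - 1/c^3) * std_normal_density c) \<le> c * std_normal_tail c"
    using std_normal_tail_ge[OF assms] assms by (intro mult_left_mono) auto
  moreover have "c * ((1/c - 1/c^3) * std_normal_density c)
      = std_normal_density c - std_normal_density c / c\<^sup>2"
    using assms by (simp add: field_simps power2_eq_square power3_eq_cube)
  ultimately show ?thesis by linarith
qed

lemma std_normal_density_minus_tail_ge:
  assumes "0 \<le> c" "0 < k"
  shows "std_normal_density (c + k) * k / (c + k) \<le> std_normal_density (c + k) - c * std_normal_tail (c + k)"
proof -
  have "c * std_normal_tail (c + k) \<le> c * (std_normal_density (c + k) / (c + k))"
    using std_normal_tail_le[of "c + k"] assms by (intro mult_left_mono) auto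
  moreover have "std_normal_density (c + k) - c * (std_normal_density (c + k) / (c + k))
      = std_normal_density (c + k) * k / (c + k)"
    using assms by (simp add: field_simps)
  ultimately show ?thesis by linarith
qed

lemma eventually_std_normal_gain_dominates:
  fixes k K :: real
  assumes "0 < k"
  shows "eventually (\<lambda>c. 2 * (K * (c + 1)\<^sup>2 + 2) * std_normal_density c
    \<le> std_normal_density (c - k) * k / (2 * c) - (c + 1) * std_normal_density (c + 1)) at_top"
proof -
  \<comment> \<open>\<open>B c\<close> collects both loss terms, divided by \<open>std_normal_density c\<close>\<close>
  define B where "B c = 2 * (K * (c + 1)\<^sup>2 + 2) + (c + 1) * exp (- c - 1/2)" for c :: real
  have "((\<lambda>c. B c * c / exp (k * c)) \<longlongrightarrow> 0) at_top"
    unfolding B_def using assms by real_asymp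
  moreover have "0 < k * exp (- k\<^sup>2 / 2) / 2" using assms by simp
  ultimately have "eventually (\<lambda>c. B c * c / exp (k * c) < k * exp (- k\<^sup>2 / 2) / 2) at_top"
    by (rule order_tendstoD)
  then show ?thesis using eventually_gt_at_top[of 0]
  proof eventually_elim
    case (elim c)
    then have "B c \<le> exp (k * c) * exp (- k\<^sup>2 / 2) * k / (2 * c)"
      by (simp add: field_simps)
    then have "std_normal_density c * B c
        \<le> std_normal_density c * (exp (k * c) * exp (- k\<^sup>2 / 2) * k / (2 * c))"
      by (intro mult_left_mono) auto
    then show ?case
      unfolding B_def std_normal_density_diff std_normal_density_add_1 by (simp add: algebra_simps)
  qed
qed

section \<open>The normal distribution function and its inverse\<close>

lemma real_distribution_std_normal: "real_distribution (density lborel std_normal_density)"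
proof -
  interpret P: prob_space "density lborel std_normal_density" by (rule prob_space_std_normal)
  show ?thesis by unfold_locales simp
qed

lemma Phi_eq_cdf: "Phi = cdf (density lborel std_normal_density)"
  by (auto simp: Phi_def cdf_def fun_eq_iff)

lemma isCont_Phi: "isCont Phi x"
proof -
  interpret R: real_distribution "density lborel std_normal_density"
    by (rule real_distribution_std_normal)
  have "AE z in lborel. z \<notin> {x}"
    by (rule AE_not_in) (rule finite_imp_null_set_lborel, simp)
  then have "AE z in lborel. z \<in> {x} \<longrightarrow> std_normal_density z = 0"
    by eventually_elim auto
  then have "{x} \<in> null_sets (density lborel std_normal_density)"
    by (subst null_sets_density_iff) auto
  then have "measure (density lborel std_normal_density) {x} = 0"
    by (auto simp: measure_def dest: null_setsD1)
  then show ?thesis unfolding Phi_eq_cdf by (simp add: R.isCont_cdf)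
qed

lemma strict_mono_Phi: "strict_mono Phi"
proof (rule strict_monoI, rule ccontr)
  interpret R: real_distribution "density lborel std_normal_density"
    by (rule real_distribution_std_normal)
  fix x y :: real assume xy: "x < y" and "\<not> Phi x < Phi y"
  moreover have "Phi x \<le> Phi y" unfolding Phi_eq_cdf using xy by (intro R.cdf_nondecreasing) simp
  ultimately have "measure (density lborel std_normal_density) {x<..y} = 0"
    unfolding Phi_eq_cdf using R.cdf_diff_eq[OF xy] by simp
  then have "{x<..y} \<in> null_sets (density lborel std_normal_density)"
    by (simp add: R.emeasure_eq_measure null_setsI)
  then have "AE z in lborel. z \<in> {x<..y} \<longrightarrow> std_normal_density z = 0"
    by (subst (asm) null_sets_density_iff) auto
  moreover have "\<And>z. std_normal_density z \<noteq> 0"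
    using normal_density_pos[of 1 0] by (metis less_irrefl zero_less_one)
  ultimately have "AE z in lborel. z \<notin> {x<..y}" by simp
  then have "{x<..y} \<in> null_sets lborel" by (subst AE_iff_null_sets) auto
  then show False using xy by auto
qed

lemma Phi_less_1: "Phi x < 1"
proof -
  interpret R: real_distribution "density lborel std_normal_density"
    by (rule real_distribution_std_normal)
  have "Phi (x + 1) \<le> 1" unfolding Phi_eq_cdf by (rule R.cdf_bounded_prob)
  then show ?thesis using strict_mono_Phi[THEN strict_monoD, of x "x + 1"] by simp
qed

lemma Phi_Phi_inv:
  assumes "0 < p" "p < 1"
  shows "Phi (Phi_inv p) = p"
proof -
  interpret R: real_distribution "density lborel std_normal_density"
    by (rule real_distribution_std_normal)
  have "eventually (\<lambda>x. Phi x < p) at_bot"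
    using R.cdf_lim_at_bot assms(1) unfolding Phi_eq_cdf[symmetric] by (rule order_tendstoD)
  then obtain a where a: "Phi a < p" by (auto simp: eventually_at_bot_linorder)
  have "eventually (\<lambda>x. p < Phi x) at_top"
    using R.cdf_lim_at_top_prob assms(2) unfolding Phi_eq_cdf[symmetric] by (rule order_tendstoD)
  then obtain b where b: "p < Phi b" by (auto simp: eventually_at_top_linorder)
  have "a \<le> b"
  proof (rule ccontr)
    assume "\<not> a \<le> b"
    then have "Phi b < Phi a" using strict_mono_Phi by (simp add: strict_mono_less)
    then show False using a b by simp
  qed
  moreover have "continuous_on {a..b} Phi" using isCont_Phi by (intro continuous_at_imp_continuous_on) auto
  ultimately obtain x where "Phi x = p" using IVT'[of Phi a p b] a b by auto
  then have "\<exists>!x. Phi x = p" using strict_mono_eq[OF strict_mono_Phi] by auto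
  then show ?thesis unfolding Phi_inv_def by (rule theI')
qed

lemma filterlim_Phi_inv_at_left_1: "filterlim Phi_inv at_top (at_left 1)"
proof (subst filterlim_at_top, intro allI)
  fix M :: real
  have "max 0 (Phi M) < 1" using Phi_less_1 by simp
  then have "eventually (\<lambda>p. max 0 (Phi M) < p \<and> p < 1) (at_left (1::real))"
    by (intro eventually_at_leftI[of "max 0 (Phi M)"]) auto
  then show "eventually (\<lambda>p. M \<le> Phi_inv p) (at_left 1)"
  proof eventually_elim
    case (elim p)
    then have "Phi M < Phi (Phi_inv p)" using Phi_Phi_inv by simp
    then show ?case using strict_mono_Phi by (simp add: strict_mono_less)
  qed
qed

section \<open>Integrals against a normal distribution\<close>

abbreviation normal_measure :: "real \<Rightarrow> real \<Rightarrow> real measure" where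
  "normal_measure \<mu> \<sigma> \<equiv> density lborel (normal_density \<mu> \<sigma>)"

lemma normal_density_at_affine:
  "0 < \<sigma> \<Longrightarrow> normal_density \<mu> \<sigma> (\<mu> + \<sigma> * z) = std_normal_density z / \<sigma>"
  unfolding normal_density_def
  by (simp add: real_sqrt_mult power_mult_distrib field_simps)

lemma integral_normal_measure_eq_std:
  fixes g :: "real \<Rightarrow> real"
  assumes s: "0 < \<sigma>" and g[measurable]: "g \<in> borel_measurable borel"
  shows "integral\<^sup>L (normal_measure \<mu> \<sigma>) g = (\<integral>z. std_normal_density z * g (\<mu> + \<sigma> * z) \<partial>lborel)"
proof -
  have "integral\<^sup>L (normal_measure \<mu> \<sigma>) g = (\<integral>x. normal_density \<mu> \<sigma> x * g x \<partial>lborel)"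
    by (subst integral_real_density) auto
  also have "\<dots> = \<bar>\<sigma>\<bar> *\<^sub>R (\<integral>z. normal_density \<mu> \<sigma> (\<mu> + \<sigma> * z) * g (\<mu> + \<sigma> * z) \<partial>lborel)"
    using s by (intro lborel_integral_real_affine) simp
  also have "\<dots> = (\<integral>z. std_normal_density z * g (\<mu> + \<sigma> * z) \<partial>lborel)"
    using s by (simp add: normal_density_at_affine)
  finally show ?thesis .
qed

lemma integrable_normal_measure_affine_bound:
  fixes g :: "real \<Rightarrow> real"
  assumes s: "0 < \<sigma>" and g[measurable]: "g \<in> borel_measurable borel"
    and bound: "\<And>x. \<bar>g x\<bar> \<le> a + b * \<bar>x\<bar>"
  shows "integrable (normal_measure \<mu> \<sigma>) g"
proof -
  interpret P: prob_space "normal_measure \<mu> \<sigma>" using s by (rule prob_space_normal_density)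
  have "integrable (normal_measure \<mu> \<sigma>) (\<lambda>x. x)"
    using integrable_normal_moment_nz_1[OF s, of \<mu>]
    by (subst integrable_real_density) (auto simp: mult.commute)
  then have "integrable (normal_measure \<mu> \<sigma>) (\<lambda>x. a + b * \<bar>x\<bar>)"
    by auto
  then show ?thesis
    by (rule Bochner_Integration.integrable_bound) (auto intro!: AE_I2 order.trans[OF bound abs_ge_self])
qed

lemma integral_normal_measure_id:
  assumes "0 < \<sigma>"
  shows "integral\<^sup>L (normal_measure \<mu> \<sigma>) (\<lambda>x. x) = \<mu>"
  using integral_normal_moment_nz_1[OF assms, of \<mu>]
  by (subst integral_real_density) (auto simp: mult.commute)

lemma integral_normal_measure_excess:
  assumes s: "0 < \<sigma>" and y: "0 \<le> y"
  shows "integral\<^sup>L (normal_measure \<mu> \<sigma>) (\<lambda>x. (x - (\<mu> + c * \<sigma>)) * indicator {\<mu> + y * \<sigma><..} x)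
       = \<sigma> * (std_normal_density y - c * std_normal_tail y)"
proof -
  have i1: "integrable lborel (\<lambda>z. indicator {y<..} z * (z * std_normal_density z))"
    using std_normal_first_moment_tail(1)[OF y] by (simp add: set_integrable_def)
  have i2: "integrable lborel (\<lambda>z. indicator {y<..} z * std_normal_density z)"
    using set_integrable_std_normal_density[of "{y<..}"] by (simp add: set_integrable_def)
  have "integral\<^sup>L (normal_measure \<mu> \<sigma>) (\<lambda>x. (x - (\<mu> + c * \<sigma>)) * indicator {\<mu> + y * \<sigma><..} x)
     = (\<integral>z. \<sigma> * (indicator {y<..} z * (z * std_normal_density z))
           - (\<sigma> * c) * (indicator {y<..} z * std_normal_density z) \<partial>lborel)"
    using s by (subst integral_normal_measure_eq_std[OF s], simp)
      (auto intro!: Bochner_Integration.integral_cong simp: indicator_def algebra_simps mult_less_cancel_left)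
  also have "\<dots> = \<sigma> * (\<integral>z. indicator {y<..} z * (z * std_normal_density z) \<partial>lborel)
                 - (\<sigma> * c) * (\<integral>z. indicator {y<..} z * std_normal_density z \<partial>lborel)"
    using i1 i2 by simp
  also have "(\<integral>z. indicator {y<..} z * (z * std_normal_density z) \<partial>lborel) = std_normal_density y"
    using std_normal_first_moment_tail(2)[OF y] by (simp add: set_lebesgue_integral_def)
  also have "(\<integral>z. indicator {y<..} z * std_normal_density z \<partial>lborel) = std_normal_tail y"
    using std_normal_tail_eq_integral[of y] by (simp add: set_lebesgue_integral_def)
  finally show ?thesis by (simp add: algebra_simps)
qed

lemma integral_normal_measure_shortfall_le:
  assumes s: "0 < \<sigma>"
  shows "integral\<^sup>L (normal_measure \<mu> \<sigma>) (\<lambda>x. max ((\<mu> + c * \<sigma>) - x) 0) \<le> \<sigma> * (\<bar>c\<bar> + 1)"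
proof -
  define g where "g z = (\<sigma> * (\<bar>c\<bar> + 1/2)) * std_normal_density z + (\<sigma>/2) * (std_normal_density z * z\<^sup>2)" for z
  have g_int: "integrable lborel g"
    using integrable_std_normal_moment[of 2] unfolding g_def by simp
  have bound: "std_normal_density z * max ((\<mu> + c * \<sigma>) - (\<mu> + \<sigma> * z)) 0 \<le> g z" for z
  proof -
    \<comment> \<open>as \<open>-z \<le> (1 + z\<^sup>2)/2\<close>\<close>
    have "max (c - z) 0 \<le> \<bar>c\<bar> + 1/2 + z\<^sup>2/2"
      using sum_squares_ge_zero[of "z+1" 0] by (auto simp: power2_eq_square algebra_simps)
    moreover have "max ((\<mu> + c * \<sigma>) - (\<mu> + \<sigma> * z)) 0 = \<sigma> * max (c - z) 0"
      using s by (simp add: max_def algebra_simps mult_le_cancel_left)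
    ultimately have "max ((\<mu> + c * \<sigma>) - (\<mu> + \<sigma> * z)) 0 \<le> \<sigma> * (\<bar>c\<bar> + 1/2 + z\<^sup>2/2)"
      using s by simp
    then have "std_normal_density z * max ((\<mu> + c * \<sigma>) - (\<mu> + \<sigma> * z)) 0
        \<le> std_normal_density z * (\<sigma> * (\<bar>c\<bar> + 1/2 + z\<^sup>2/2))" by (intro mult_left_mono) auto
    then show ?thesis unfolding g_def by (simp add: algebra_simps)
  qed
  have "integral\<^sup>L (normal_measure \<mu> \<sigma>) (\<lambda>x. max ((\<mu> + c * \<sigma>) - x) 0)
      = (\<integral>z. std_normal_density z * max ((\<mu> + c * \<sigma>) - (\<mu> + \<sigma> * z)) 0 \<partial>lborel)"
    by (rule integral_normal_measure_eq_std[OF s]) simp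
  also have "\<dots> \<le> integral\<^sup>L lborel g"
  proof (rule integral_mono[OF _ g_int bound])
    have norm_bound: "norm (std_normal_density z * max ((\<mu> + c * \<sigma>) - (\<mu> + \<sigma> * z)) 0) \<le> norm (g z)" for z
    proof -
      have "0 \<le> std_normal_density z * max ((\<mu> + c * \<sigma>) - (\<mu> + \<sigma> * z)) 0" by simp
      then show ?thesis using bound[of z] abs_ge_self[of "g z"] unfolding real_norm_def by linarith
    qed
    show "integrable lborel (\<lambda>z. std_normal_density z * max ((\<mu> + c * \<sigma>) - (\<mu> + \<sigma> * z)) 0)"
      by (rule Bochner_Integration.integrable_bound[OF g_int], simp, rule AE_I2, rule norm_bound)
  qed
  also have "\<dots> = \<sigma> * (\<bar>c\<bar> + 1/2) + \<sigma>/2"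
  proof -
    have "(\<integral>z. std_normal_density z * z\<^sup>2 \<partial>lborel) = 1"
      using integral_std_normal_moment_even[of 1] by simp
    then show ?thesis using integrable_std_normal_moment[of 2] unfolding g_def by simp
  qed
  finally show ?thesis by (simp add: algebra_simps)
qed

section \<open>The bandit probability space\<close>

abbreviation noise_measure :: "(nat \<Rightarrow> real) measure" where
  "noise_measure \<equiv> \<Pi>\<^sub>M i\<in>(UNIV::nat set). density lborel std_normal_density"

lemma prob_space_noise_measure: "prob_space noise_measure"
  by (rule prob_space_PiM) (rule prob_space_std_normal)

lemma pair_prob_space_bandit:
  assumes "0 < \<sigma>"
  shows "pair_prob_space (normal_measure \<mu> \<sigma>) noise_measure"
proof -
  interpret A: prob_space "normal_measure \<mu> \<sigma>" using assms by (rule prob_space_normal_density)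
  interpret B: prob_space noise_measure by (rule prob_space_noise_measure)
  show ?thesis by unfold_locales
qed

lemma
  fixes h :: "real \<Rightarrow> real"
  assumes h[measurable]: "h \<in> borel_measurable borel"
  shows integral_bandit_space_fst:
      "(\<integral>\<omega>. h (fst \<omega>) \<partial>bandit_space \<mu> \<sigma>) = integral\<^sup>L (normal_measure \<mu> \<sigma>) h"
    and integrable_bandit_space_fst:
      "integrable (normal_measure \<mu> \<sigma>) h \<Longrightarrow> integrable (bandit_space \<mu> \<sigma>) (\<lambda>\<omega>. h (fst \<omega>))"
proof -
  interpret B: prob_space noise_measure by (rule prob_space_noise_measure)
  have distr: "distr (bandit_space \<mu> \<sigma>) (normal_measure \<mu> \<sigma>) fst = normal_measure \<mu> \<sigma>"
    unfolding bandit_space_def by (rule B.distr_pair_fst)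
  have fst: "fst \<in> measurable (bandit_space \<mu> \<sigma>) (normal_measure \<mu> \<sigma>)"
    unfolding bandit_space_def by simp
  show "(\<integral>\<omega>. h (fst \<omega>) \<partial>bandit_space \<mu> \<sigma>) = integral\<^sup>L (normal_measure \<mu> \<sigma>) h"
    using integral_distr[OF fst, of h] distr by simp
  show "integrable (normal_measure \<mu> \<sigma>) h \<Longrightarrow> integrable (bandit_space \<mu> \<sigma>) (\<lambda>\<omega>. h (fst \<omega>))"
    using integrable_distr_eq[OF fst, of h] distr by simp
qed

lemma
  fixes h :: "real \<Rightarrow> real"
  assumes s: "0 < \<sigma>" and h[measurable]: "h \<in> borel_measurable borel"
    and h_int: "integrable (normal_measure \<mu> \<sigma>) h" and A[measurable]: "A \<in> sets noise_measure"
  shows integrable_bandit_space_fst_noise_event: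
      "integrable (bandit_space \<mu> \<sigma>) (\<lambda>\<omega>. h (fst \<omega>) * indicator A (snd \<omega>))"
    and integral_bandit_space_fst_noise_event:
      "(\<integral>\<omega>. h (fst \<omega>) * indicator A (snd \<omega>) \<partial>bandit_space \<mu> \<sigma>)
         = integral\<^sup>L (normal_measure \<mu> \<sigma>) h * measure noise_measure A"
proof -
  interpret P: pair_prob_space "normal_measure \<mu> \<sigma>" noise_measure
    using s by (rule pair_prob_space_bandit)
  have eq: "(\<lambda>\<omega>. h (fst \<omega>) * indicator A (snd \<omega>))
      = (\<lambda>\<omega>. indicator (space (normal_measure \<mu> \<sigma>) \<times> A) \<omega> *\<^sub>R h (fst \<omega>))"
    by (auto simp: indicator_def fun_eq_iff)
  have "space (normal_measure \<mu> \<sigma>) \<times> A \<in> sets (bandit_space \<mu> \<sigma>)"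
    unfolding bandit_space_def by simp
  then show int: "integrable (bandit_space \<mu> \<sigma>) (\<lambda>\<omega>. h (fst \<omega>) * indicator A (snd \<omega>))"
    unfolding eq by (rule integrable_mult_indicator[OF _ integrable_bandit_space_fst[OF h h_int]])
  have "(\<integral>\<omega>. h (fst \<omega>) * indicator A (snd \<omega>) \<partial>bandit_space \<mu> \<sigma>)
      = (\<integral>x. (\<integral>w. h x * indicator A w \<partial>noise_measure) \<partial>normal_measure \<mu> \<sigma>)"
    using P.integral_fst'[of "\<lambda>\<omega>. h (fst \<omega>) * indicator A (snd \<omega>)"] int
    unfolding bandit_space_def by simp
  then show "(\<integral>\<omega>. h (fst \<omega>) * indicator A (snd \<omega>) \<partial>bandit_space \<mu> \<sigma>)
      = integral\<^sup>L (normal_measure \<mu> \<sigma>) h * measure noise_measure A"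
    by simp
qed

lemma has_bochner_integral_bandit_space_combination:
  fixes h1 h2 :: "real \<Rightarrow> real"
  assumes s: "0 < \<sigma>" and h[measurable]: "h1 \<in> borel_measurable borel" "h2 \<in> borel_measurable borel"
    and h_int: "integrable (normal_measure \<mu> \<sigma>) h1" "integrable (normal_measure \<mu> \<sigma>) h2"
    and A[measurable]: "A1 \<in> sets noise_measure" "A2 \<in> sets noise_measure"
  shows "has_bochner_integral (bandit_space \<mu> \<sigma>)
      (\<lambda>\<omega>. (fst \<omega> - lam) * p + q * (h1 (fst \<omega>) * indicator A1 (snd \<omega>) - h2 (fst \<omega>) * indicator A2 (snd \<omega>)))
      ((\<mu> - lam) * p + q * (integral\<^sup>L (normal_measure \<mu> \<sigma>) h1 * measure noise_measure A1
                          - integral\<^sup>L (normal_measure \<mu> \<sigma>) h2 * measure noise_measure A2))"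
proof -
  interpret P: prob_space "normal_measure \<mu> \<sigma>" using s by (rule prob_space_normal_density)
  have lin_meas: "(\<lambda>x::real. x - lam) \<in> borel_measurable borel" by simp
  have id_int: "integrable (normal_measure \<mu> \<sigma>) (\<lambda>x. x)"
    by (rule integrable_normal_measure_affine_bound[OF s, of _ 0 1]) auto
  then have lin_int: "integrable (normal_measure \<mu> \<sigma>) (\<lambda>x. x - lam)" by simp
  have "integral\<^sup>L (normal_measure \<mu> \<sigma>) (\<lambda>x. x - lam) = \<mu> - lam"
    using Bochner_Integration.integral_diff[OF id_int, of "\<lambda>_. lam"] integral_normal_measure_id[OF s]
    using P.prob_space by simp
  then have lin: "has_bochner_integral (bandit_space \<mu> \<sigma>) (\<lambda>\<omega>. fst \<omega> - lam) (\<mu> - lam)"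
    unfolding has_bochner_integral_iff
    using integral_bandit_space_fst[OF lin_meas] integrable_bandit_space_fst[OF lin_meas lin_int] by simp
  have events: "has_bochner_integral (bandit_space \<mu> \<sigma>) (\<lambda>\<omega>. h1 (fst \<omega>) * indicator A1 (snd \<omega>))
      (integral\<^sup>L (normal_measure \<mu> \<sigma>) h1 * measure noise_measure A1)"
    "has_bochner_integral (bandit_space \<mu> \<sigma>) (\<lambda>\<omega>. h2 (fst \<omega>) * indicator A2 (snd \<omega>))
      (integral\<^sup>L (normal_measure \<mu> \<sigma>) h2 * measure noise_measure A2)"
    unfolding has_bochner_integral_iff
    using integrable_bandit_space_fst_noise_event[OF s h(1) h_int(1) A(1)]
      integral_bandit_space_fst_noise_event[OF s h(1) h_int(1) A(1)]
      integrable_bandit_space_fst_noise_event[OF s h(2) h_int(2) A(2)]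
      integral_bandit_space_fst_noise_event[OF s h(2) h_int(2) A(2)]
    by simp_all
  have "has_bochner_integral (bandit_space \<mu> \<sigma>) (\<lambda>\<omega>. (fst \<omega> - lam) * p) ((\<mu> - lam) * p)"
    by (rule has_bochner_integral_mult_left) (rule lin)
  moreover have "has_bochner_integral (bandit_space \<mu> \<sigma>)
      (\<lambda>\<omega>. q * (h1 (fst \<omega>) * indicator A1 (snd \<omega>) - h2 (fst \<omega>) * indicator A2 (snd \<omega>)))
      (q * (integral\<^sup>L (normal_measure \<mu> \<sigma>) h1 * measure noise_measure A1
            - integral\<^sup>L (normal_measure \<mu> \<sigma>) h2 * measure noise_measure A2))"
    by (rule has_bochner_integral_mult_right) (rule has_bochner_integral_diff[OF events])
  ultimately show ?thesis by (rule has_bochner_integral_add)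
qed

lemma distr_noise_measure_component:
  "distr noise_measure lborel (\<lambda>w. w i) = density lborel std_normal_density"
proof -
  have "distr noise_measure lborel (\<lambda>w. w i) = distr noise_measure (density lborel std_normal_density) (\<lambda>w. w i)"
    by (rule distr_cong) auto
  also have "\<dots> = density lborel std_normal_density"
    by (rule distr_PiM_component) (auto intro: prob_space_std_normal)
  finally show ?thesis .
qed

lemma indep_vars_noise_measure:
  assumes "0 < n"
  shows "prob_space.indep_vars noise_measure (\<lambda>_. borel) (\<lambda>i w. w i) {..<n}"
proof -
  interpret D: prob_space "density lborel std_normal_density" by (rule prob_space_std_normal)
  interpret P: product_prob_space "\<lambda>_::nat. density lborel std_normal_density" UNIV
    by unfold_locales
  have "distr noise_measure (\<Pi>\<^sub>M i\<in>{..<n}. borel) (\<lambda>x. \<lambda>i\<in>{..<n}. x i)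
      = distr noise_measure (\<Pi>\<^sub>M i\<in>{..<n}. density lborel std_normal_density) (\<lambda>x. restrict x {..<n})"
    by (rule distr_cong) (auto intro!: sets_PiM_cong)
  also have "\<dots> = (\<Pi>\<^sub>M i\<in>{..<n}. density lborel std_normal_density)"
    by (rule P.distr_PiM_restrict_finite) auto
  also have "\<dots> = (\<Pi>\<^sub>M i\<in>{..<n}. distr noise_measure borel (\<lambda>w. w i))"
  proof (rule PiM_cong[OF refl])
    fix i
    have "distr noise_measure borel (\<lambda>w. w i) = distr noise_measure lborel (\<lambda>w. w i)"
      by (rule distr_cong) auto
    then show "density lborel std_normal_density = distr noise_measure borel (\<lambda>w. w i)"
      using distr_noise_measure_component by simp
  qed
  finally show ?thesis
    using assms by (subst P.indep_vars_iff_distr_eq_PiM') auto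
qed

definition normalized_noise_sum :: "nat \<Rightarrow> (nat \<Rightarrow> real) \<Rightarrow> real" where
  "normalized_noise_sum n w = (\<Sum>i<n. w i) / sqrt n"

lemma distributed_normalized_noise_sum:
  assumes n: "0 < n" and a: "\<bar>a\<bar> = 1"
  shows "distributed noise_measure lborel (\<lambda>w. a * normalized_noise_sum n w) std_normal_density"
proof -
  interpret P: prob_space noise_measure by (rule prob_space_noise_measure)
  have "distributed noise_measure lborel (\<lambda>w. \<Sum>i\<in>{..<n}. w i)
      (normal_density (\<Sum>i\<in>{..<n}. 0) (sqrt (\<Sum>i\<in>{..<n}. 1\<^sup>2)))"
    using n indep_vars_noise_measure distr_noise_measure_component
    by (intro P.sum_indep_normal[where X="\<lambda>i w. w i"]) (auto simp: distributed_def)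
  then have "distributed noise_measure lborel (\<lambda>w. \<Sum>i<n. w i) (normal_density 0 (sqrt n))"
    by simp
  moreover have sn: "0 < sqrt (real n)" using n by simp
  ultimately have "distributed noise_measure lborel (\<lambda>w. 0 + (a / sqrt n) * (\<Sum>i<n. w i))
      (normal_density (0 + (a / sqrt n) * 0) (\<bar>a / sqrt n\<bar> * sqrt n))"
    using a by (intro P.normal_density_affine) auto
  then show ?thesis
    using sn a by (simp add: normalized_noise_sum_def)
qed

lemma
  assumes "0 < n"
  shows measure_normalized_noise_sum_greater:
      "measure noise_measure {w \<in> space noise_measure. t < normalized_noise_sum n w} = std_normal_tail t"
    and measure_normalized_noise_sum_geq:
      "measure noise_measure {w \<in> space noise_measure. - t \<le> normalized_noise_sum n w} = Phi t"
proof -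
  note D1 = distributed_normalized_noise_sum[OF assms, of 1, OF abs_one]
  have "\<bar>- 1 :: real\<bar> = 1" by simp
  note D2 = distributed_normalized_noise_sum[OF assms this]
  have "measure noise_measure {w \<in> space noise_measure. t < normalized_noise_sum n w}
      = measure (distr noise_measure lborel (\<lambda>w. 1 * normalized_noise_sum n w)) {t<..}"
    by (subst measure_distr[OF distributed_measurable[OF D1]])
      (auto intro!: arg_cong[where f="measure noise_measure"])
  also have "\<dots> = std_normal_tail t"
    unfolding distributed_distr_eq_density[OF D1] std_normal_tail_def ..
  finally show "measure noise_measure {w \<in> space noise_measure. t < normalized_noise_sum n w} = std_normal_tail t" .
  have "measure noise_measure {w \<in> space noise_measure. - t \<le> normalized_noise_sum n w}
      = measure (distr noise_measure lborel (\<lambda>w. - 1 * normalized_noise_sum n w)) {..t}"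
    by (subst measure_distr[OF distributed_measurable[OF D2]])
      (auto intro!: arg_cong[where f="measure noise_measure"])
  also have "\<dots> = Phi t"
    unfolding distributed_distr_eq_density[OF D2] Phi_def ..
  finally show "measure noise_measure {w \<in> space noise_measure. - t \<le> normalized_noise_sum n w} = Phi t" .
qed

section \<open>Payoffs of stopping times\<close>

definition discounted_weight :: "real \<Rightarrow> enat \<Rightarrow> real" where
  "discounted_weight \<gamma> e = (\<Sum>t. if enat t \<le> e then \<gamma>^t else 0)"

context
  fixes \<gamma> :: real
  assumes \<gamma>: "0 < \<gamma>" "\<gamma> < 1"
begin

lemma summable_discounted_weight: "summable (\<lambda>t. if enat t \<le> e then \<gamma>^t else 0)"
  by (rule summable_comparison_test[OF _ summable_geometric[of \<gamma>]]) (use \<gamma> in auto)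

lemma discounted_weight_le: "discounted_weight \<gamma> e \<le> 1 / (1 - \<gamma>)"
proof -
  have "discounted_weight \<gamma> e \<le> (\<Sum>t. \<gamma>^t)" unfolding discounted_weight_def
    by (rule suminf_le[OF _ summable_discounted_weight summable_geometric]) (use \<gamma> in auto)
  also have "\<dots> = 1 / (1 - \<gamma>)" using suminf_geometric[of \<gamma>] \<gamma> by simp
  finally show ?thesis .
qed

lemma discounted_weight_ge:
  assumes "1 \<le> e"
  shows "1 + \<gamma> \<le> discounted_weight \<gamma> e"
proof -
  have "(\<Sum>t\<in>{0,1}. if enat t \<le> e then \<gamma>^t else 0) \<le> discounted_weight \<gamma> e"
    unfolding discounted_weight_def by (rule sum_le_suminf[OF summable_discounted_weight]) (use \<gamma> in auto)
  moreover have "enat (Suc 0) \<le> e" using assms by (simp add: one_enat_def)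
  ultimately show ?thesis by (simp add: zero_enat_def[symmetric])
qed

lemma discounted_weight_nonneg: "0 \<le> discounted_weight \<gamma> e"
  unfolding discounted_weight_def by (rule suminf_nonneg[OF summable_discounted_weight]) (use \<gamma> in auto)

lemma discounted_weight_infinity: "discounted_weight \<gamma> \<infinity> = 1 / (1 - \<gamma>)"
  unfolding discounted_weight_def using suminf_geometric[of \<gamma>] \<gamma> by simp

lemma discounted_weight_enat: "discounted_weight \<gamma> (enat n) = (1 - \<gamma>^Suc n) / (1 - \<gamma>)"
proof -
  have "discounted_weight \<gamma> (enat n) = (\<Sum>t<Suc n. if enat t \<le> enat n then \<gamma>^t else 0)"
    unfolding discounted_weight_def by (rule suminf_finite) auto
  also have "\<dots> = (\<Sum>t<Suc n. \<gamma>^t)" by (intro sum.cong) auto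
  also have "\<dots> = (1 - \<gamma>^Suc n) / (1 - \<gamma>)"
    using \<gamma> by (subst geometric_sum) (auto simp: field_simps)
  finally show ?thesis .
qed

lemma suminf_discounted: "(\<Sum>t. if enat t \<le> e then \<gamma>^t * x else 0) = x * discounted_weight \<gamma> e"
proof -
  have "(\<lambda>t. if enat t \<le> e then \<gamma>^t * x else 0) = (\<lambda>t. x * (if enat t \<le> e then \<gamma>^t else 0))"
    by auto
  then show ?thesis
    unfolding discounted_weight_def using suminf_mult[OF summable_discounted_weight, of x] by simp
qed

end

lemma measurable_reward_history:
  "(\<lambda>\<omega>. \<lambda>i\<in>{i. enat i < t}. reward \<sigma>W i \<omega>)
     \<in> measurable (bandit_space \<mu> \<sigma>) (\<Pi>\<^sub>M i\<in>{i. enat i < t}. (borel :: real measure))"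
  unfolding reward_def bandit_space_def by (rule measurable_restrict) simp

lemma sets_reward_filtration: "sets (reward_filtration \<sigma>W \<mu> \<sigma> t) \<subseteq> sets (bandit_space \<mu> \<sigma>)"
  unfolding reward_filtration_def by (rule sets_image_in_sets[OF refl measurable_reward_history])

lemma admissible_stopping_time_ge_sets:
  assumes "\<tau> \<in> admissible_stopping_times \<sigma>W \<mu> \<sigma>"
  shows "{\<omega> \<in> space (bandit_space \<mu> \<sigma>). enat t \<le> \<tau> \<omega>} \<in> sets (bandit_space \<mu> \<sigma>)"
proof (cases t)
  case 0
  then show ?thesis by (simp add: zero_enat_def[symmetric])
next
  case (Suc s)
  have "Measurable.pred (reward_filtration \<sigma>W \<mu> \<sigma> s) (\<lambda>\<omega>. \<tau> \<omega> \<le> s)"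
    using assms unfolding admissible_stopping_times_def stopping_time_def by auto
  then have "{\<omega> \<in> space (reward_filtration \<sigma>W \<mu> \<sigma> s). \<tau> \<omega> \<le> s} \<in> sets (reward_filtration \<sigma>W \<mu> \<sigma> s)"
    by (rule predE)
  then have "{\<omega> \<in> space (bandit_space \<mu> \<sigma>). \<tau> \<omega> \<le> s} \<in> sets (reward_filtration \<sigma>W \<mu> \<sigma> s)"
    by (simp add: reward_filtration_def)
  then have "space (bandit_space \<mu> \<sigma>) - {\<omega> \<in> space (bandit_space \<mu> \<sigma>). \<tau> \<omega> \<le> s} \<in> sets (bandit_space \<mu> \<sigma>)"
    using sets_reward_filtration by blast
  moreover have "{\<omega> \<in> space (bandit_space \<mu> \<sigma>). enat t \<le> \<tau> \<omega>}
      = space (bandit_space \<mu> \<sigma>) - {\<omega> \<in> space (bandit_space \<mu> \<sigma>). \<tau> \<omega> \<le> s}"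
    using Suc by (auto simp: Suc_ile_eq not_le)
  ultimately show ?thesis by simp
qed

lemma borel_measurable_discounted_weight:
  assumes "\<tau> \<in> admissible_stopping_times \<sigma>W \<mu> \<sigma>"
  shows "(\<lambda>\<omega>. discounted_weight \<gamma> (\<tau> \<omega>)) \<in> borel_measurable (bandit_space \<mu> \<sigma>)"
  unfolding discounted_weight_def
  by (intro borel_measurable_suminf measurable_If[OF _ _ admissible_stopping_time_ge_sets[OF assms]]) simp_all

lemma stop_payoff_eq:
  assumes "0 < \<gamma>" "\<gamma> < 1"
  shows "stop_payoff \<sigma>W \<mu> \<sigma> \<gamma> lam \<tau>
    = (\<integral>\<omega>. (fst \<omega> - lam) * discounted_weight \<gamma> (\<tau> \<omega>) \<partial>bandit_space \<mu> \<sigma>)"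
  unfolding stop_payoff_def quality_def suminf_discounted[OF assms] ..

lemma integrable_stop_payoff:
  assumes \<gamma>: "0 < \<gamma>" "\<gamma> < 1" and s: "0 < \<sigma>" and \<tau>: "\<tau> \<in> admissible_stopping_times \<sigma>W \<mu> \<sigma>"
  shows "integrable (bandit_space \<mu> \<sigma>) (\<lambda>\<omega>. (fst \<omega> - lam) * discounted_weight \<gamma> (\<tau> \<omega>))"
proof (rule Bochner_Integration.integrable_bound)
  have "integrable (normal_measure \<mu> \<sigma>) (\<lambda>x. \<bar>x - lam\<bar> / (1 - \<gamma>))"
    using \<gamma> by (intro integrable_normal_measure_affine_bound[OF s, where a="\<bar>lam\<bar> / (1-\<gamma>)" and b="1/(1-\<gamma>)"])
      (auto simp: divide_right_mono add_divide_distrib[symmetric])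
  then show "integrable (bandit_space \<mu> \<sigma>) (\<lambda>\<omega>. \<bar>fst \<omega> - lam\<bar> / (1 - \<gamma>))"
    by (rule integrable_bandit_space_fst[rotated]) simp
  show "(\<lambda>\<omega>. (fst \<omega> - lam) * discounted_weight \<gamma> (\<tau> \<omega>)) \<in> borel_measurable (bandit_space \<mu> \<sigma>)"
    using borel_measurable_discounted_weight[OF \<tau>] unfolding bandit_space_def by measurable
  show "AE \<omega> in bandit_space \<mu> \<sigma>. norm ((fst \<omega> - lam) * discounted_weight \<gamma> (\<tau> \<omega>)) \<le> norm (\<bar>fst \<omega> - lam\<bar> / (1 - \<gamma>))"
  proof (rule AE_I2)
    fix \<omega>
    have "\<bar>fst \<omega> - lam\<bar> * discounted_weight \<gamma> (\<tau> \<omega>) \<le> \<bar>fst \<omega> - lam\<bar> * (1 / (1 - \<gamma>))"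
      by (intro mult_left_mono discounted_weight_le[OF \<gamma>]) auto
    then show "norm ((fst \<omega> - lam) * discounted_weight \<gamma> (\<tau> \<omega>)) \<le> norm (\<bar>fst \<omega> - lam\<bar> / (1 - \<gamma>))"
      using discounted_weight_nonneg[OF \<gamma>] \<gamma> by (simp add: abs_mult)
  qed
qed

lemma const_1_admissible: "(\<lambda>_. 1) \<in> admissible_stopping_times \<sigma>W \<mu> \<sigma>"
  unfolding admissible_stopping_times_def by (auto intro: stopping_time_const)

lemma value_fun_le:
  assumes "\<And>\<tau>. \<tau> \<in> admissible_stopping_times \<sigma>W \<mu> \<sigma> \<Longrightarrow> stop_payoff \<sigma>W \<mu> \<sigma> \<gamma> lam \<tau> \<le> U"
  shows "value_fun \<sigma>W \<gamma> lam \<mu> \<sigma> \<le> U"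
  unfolding value_fun_def using const_1_admissible[of \<sigma>W \<mu> \<sigma>] assms by (intro cSUP_least) auto

lemma stop_payoff_le_value_fun:
  assumes "\<tau> \<in> admissible_stopping_times \<sigma>W \<mu> \<sigma>"
    and "\<And>\<tau>. \<tau> \<in> admissible_stopping_times \<sigma>W \<mu> \<sigma> \<Longrightarrow> stop_payoff \<sigma>W \<mu> \<sigma> \<gamma> lam \<tau> \<le> U"
  shows "stop_payoff \<sigma>W \<mu> \<sigma> \<gamma> lam \<tau> \<le> value_fun \<sigma>W \<gamma> lam \<mu> \<sigma>"
  unfolding value_fun_def using assms by (intro cSUP_upper bdd_aboveI2) auto

section \<open>The upper bound\<close>

lemma discounted_gain_le:
  fixes x W \<gamma> :: real
  assumes "\<gamma> < 1" "1 + \<gamma> \<le> W" "W \<le> 1 / (1 - \<gamma>)"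
  shows "x * W \<le> x * (1 + \<gamma>) + \<gamma>\<^sup>2 / (1 - \<gamma>) * max x 0"
proof (cases "0 \<le> x")
  case True
  have "1 / (1 - \<gamma>) = 1 + \<gamma> + \<gamma>\<^sup>2 / (1 - \<gamma>)"
    using assms(1) by (simp add: field_simps power2_eq_square)
  then show ?thesis using True mult_left_mono[OF assms(3) True] by (simp add: algebra_simps)
next
  case False
  then show ?thesis using mult_left_mono_neg[OF assms(2), of x] by simp
qed

lemma stop_payoff_le:
  assumes \<gamma>: "0 < \<gamma>" "\<gamma> < 1" and s: "0 < \<sigma>" and \<tau>: "\<tau> \<in> admissible_stopping_times \<sigma>W \<mu> \<sigma>"
  shows "stop_payoff \<sigma>W \<mu> \<sigma> \<gamma> lam \<tau>
    \<le> (\<mu> - lam) * (1 + \<gamma>) + \<gamma>\<^sup>2 / (1 - \<gamma>) * integral\<^sup>L (normal_measure \<mu> \<sigma>) (\<lambda>x. max (x - lam) 0)"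
proof -
  interpret P: prob_space "normal_measure \<mu> \<sigma>" using s by (rule prob_space_normal_density)
  define h where "h x = (x - lam) * (1 + \<gamma>) + \<gamma>\<^sup>2 / (1 - \<gamma>) * max (x - lam) 0" for x
  have h_meas[measurable]: "h \<in> borel_measurable borel" unfolding h_def by measurable
  have id_int: "integrable (normal_measure \<mu> \<sigma>) (\<lambda>x. x)"
    using integrable_normal_measure_affine_bound[OF s, of "\<lambda>x. x" 0 1] by simp
  have max_int: "integrable (normal_measure \<mu> \<sigma>) (\<lambda>x. max (x - lam) 0)"
    by (rule integrable_normal_measure_affine_bound[OF s, of _ "\<bar>lam\<bar>" 1]) auto
  have h_int: "integrable (normal_measure \<mu> \<sigma>) h"
    unfolding h_def using id_int max_int by (auto simp: algebra_simps)
  have "stop_payoff \<sigma>W \<mu> \<sigma> \<gamma> lam \<tau>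
      = (\<integral>\<omega>. (fst \<omega> - lam) * discounted_weight \<gamma> (\<tau> \<omega>) \<partial>bandit_space \<mu> \<sigma>)"
    by (rule stop_payoff_eq[OF \<gamma>])
  also have "\<dots> \<le> (\<integral>\<omega>. h (fst \<omega>) \<partial>bandit_space \<mu> \<sigma>)"
  proof (rule integral_mono[OF integrable_stop_payoff[OF \<gamma> s \<tau>] integrable_bandit_space_fst[OF h_meas h_int]])
    fix \<omega> assume "\<omega> \<in> space (bandit_space \<mu> \<sigma>)"
    then have "1 \<le> \<tau> \<omega>" using \<tau> unfolding admissible_stopping_times_def by auto
    then show "(fst \<omega> - lam) * discounted_weight \<gamma> (\<tau> \<omega>) \<le> h (fst \<omega>)"
      unfolding h_def
      by (intro discounted_gain_le[OF \<gamma>(2) discounted_weight_ge[OF \<gamma>] discounted_weight_le[OF \<gamma>]])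
  qed
  also have "\<dots> = integral\<^sup>L (normal_measure \<mu> \<sigma>) h"
    by (rule integral_bandit_space_fst[OF h_meas])
  also have "\<dots> = (\<mu> - lam) * (1 + \<gamma>) + \<gamma>\<^sup>2 / (1 - \<gamma>) * integral\<^sup>L (normal_measure \<mu> \<sigma>) (\<lambda>x. max (x - lam) 0)"
    unfolding h_def using id_int max_int integral_normal_measure_id[OF s] P.prob_space
    by (simp add: algebra_simps)
  finally show ?thesis .
qed

lemma discounted_excess_le:
  assumes \<gamma>: "0 < \<gamma>" "\<gamma> < 1" and s: "0 < \<sigma>"
    and c0: "2 \<le> c0" "Phi c0 = \<gamma>" and c: "c0 \<le> c"
  shows "\<gamma>\<^sup>2 / (1 - \<gamma>) * integral\<^sup>L (normal_measure \<mu> \<sigma>) (\<lambda>x. max (x - (\<mu> + c * \<sigma>)) 0) \<le> c0 / 3 * \<sigma>"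
proof -
  define X where "X = std_normal_density c - c * std_normal_tail c"
  have "max (x - (\<mu> + c * \<sigma>)) 0 = (x - (\<mu> + c * \<sigma>)) * indicator {\<mu> + c * \<sigma><..} x" for x
    by (auto simp: indicator_def)
  then have I: "integral\<^sup>L (normal_measure \<mu> \<sigma>) (\<lambda>x. max (x - (\<mu> + c * \<sigma>)) 0) = X * \<sigma>"
    unfolding X_def using integral_normal_measure_excess[OF s, of c \<mu> c] c c0 by simp
  have X_nonneg: "0 \<le> X" unfolding X_def using std_normal_tail_le[of c] c c0 by (simp add: field_simps)
  have "X \<le> std_normal_density c / c\<^sup>2"
    unfolding X_def using std_normal_density_minus_tail_le c c0 by simp
  also have "\<dots> \<le> std_normal_density c / 4"
    using c c0 power_mono[of 2 c 2] by (intro divide_left_mono) auto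
  also have "\<dots> \<le> std_normal_density c0 / 4"
    using std_normal_density_antimono[of c0 c] c c0 by simp
  finally have "X \<le> std_normal_density c0 / 4" .
  moreover have "3/4 * std_normal_density c0 / c0 \<le> 1 - \<gamma>"
    using std_normal_tail_ge_Mills[OF c0(1)] Phi_add_std_normal_tail[of c0] c0(2) by simp
  ultimately have "X / (1 - \<gamma>) \<le> (std_normal_density c0 / 4) / (3/4 * std_normal_density c0 / c0)"
    using X_nonneg c0 normal_density_pos[of 1 0 c0] by (intro frac_le) auto
  also have "\<dots> = c0 / 3" using normal_density_pos[of 1 0 c0] by (simp add: field_simps)
  finally have ratio: "\<gamma>\<^sup>2 * (X / (1 - \<gamma>)) \<le> c0 / 3"
    using \<gamma> X_nonneg by (intro mult_left_le_one_le[THEN order.trans]) (auto simp: power_le_one)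
  have "\<gamma>\<^sup>2 / (1 - \<gamma>) * (X * \<sigma>) = \<gamma>\<^sup>2 * (X / (1 - \<gamma>)) * \<sigma>" by simp
  then show ?thesis unfolding I by (simp only:) (rule mult_right_mono[OF ratio], use s in simp)
qed

lemma value_fun_neg_above_quantile:
  assumes \<gamma>: "0 < \<gamma>" "\<gamma> < 1" and s: "0 < \<sigma>"
    and c0: "2 \<le> c0" "Phi c0 = \<gamma>" and c: "c0 \<le> c"
  shows "value_fun \<sigma>W \<gamma> (\<mu> + c * \<sigma>) \<mu> \<sigma> < 0"
proof -
  have "value_fun \<sigma>W \<gamma> (\<mu> + c * \<sigma>) \<mu> \<sigma> \<le> (\<mu> - (\<mu> + c * \<sigma>)) * (1 + \<gamma>)
      + \<gamma>\<^sup>2 / (1 - \<gamma>) * integral\<^sup>L (normal_measure \<mu> \<sigma>) (\<lambda>x. max (x - (\<mu> + c * \<sigma>)) 0)"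
    by (rule value_fun_le) (rule stop_payoff_le[OF \<gamma> s])
  moreover have "(\<mu> - (\<mu> + c * \<sigma>)) * (1 + \<gamma>) \<le> - (c * \<sigma>)"
    using \<gamma> s c c0 by (simp add: algebra_simps)
  moreover have "c0 / 3 * \<sigma> < c * \<sigma>" using s c c0 by simp
  ultimately show ?thesis using discounted_excess_le[OF assms, of \<mu>] by linarith
qed

section \<open>The lower bound\<close>

definition threshold_time :: "real \<Rightarrow> nat \<Rightarrow> real \<Rightarrow> real \<times> (nat \<Rightarrow> real) \<Rightarrow> enat" where
  "threshold_time \<sigma>W n m \<omega> = (if m * n \<le> (\<Sum>i<n. reward \<sigma>W i \<omega>) then \<infinity> else enat n)"

lemma borel_measurable_reward_sum:
  assumes "n \<le> k"
  shows "(\<lambda>\<omega>. \<Sum>i<n. reward \<sigma>W i \<omega>) \<in> borel_measurable (reward_filtration \<sigma>W \<mu> \<sigma> (enat k))"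
proof -
  let ?I = "{i. enat i < enat k}"
  have "(\<lambda>\<omega>. \<lambda>i\<in>?I. reward \<sigma>W i \<omega>)
      \<in> measurable (reward_filtration \<sigma>W \<mu> \<sigma> (enat k)) (\<Pi>\<^sub>M i\<in>?I. (borel :: real measure))"
    unfolding reward_filtration_def by (rule measurable_vimage_algebra1) (auto simp: space_PiM)
  moreover have "(\<lambda>v. \<Sum>i<n. v i) \<in> borel_measurable (\<Pi>\<^sub>M i\<in>?I. (borel :: real measure))"
    using assms by (intro borel_measurable_sum measurable_component_singleton) auto
  ultimately have "(\<lambda>\<omega>. \<Sum>i<n. (\<lambda>i\<in>?I. reward \<sigma>W i \<omega>) i) \<in> borel_measurable (reward_filtration \<sigma>W \<mu> \<sigma> (enat k))"
    by (rule measurable_compose)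
  moreover have "(\<lambda>\<omega>. \<Sum>i<n. (\<lambda>i\<in>?I. reward \<sigma>W i \<omega>) i) = (\<lambda>\<omega>. \<Sum>i<n. reward \<sigma>W i \<omega>)"
    using assms by (auto intro!: sum.cong)
  ultimately show ?thesis by simp
qed

lemma threshold_time_admissible:
  assumes "0 < n"
  shows "threshold_time \<sigma>W n m \<in> admissible_stopping_times \<sigma>W \<mu> \<sigma>"
  unfolding admissible_stopping_times_def
proof (intro CollectI conjI ballI)
  fix \<omega> show "1 \<le> threshold_time \<sigma>W n m \<omega>"
    using assms by (auto simp: threshold_time_def one_enat_def)
next
  show "stopping_time (reward_filtration \<sigma>W \<mu> \<sigma>) (threshold_time \<sigma>W n m)"
    unfolding stopping_time_def
  proof
    fix t :: enat
    show "Measurable.pred (reward_filtration \<sigma>W \<mu> \<sigma> t) (\<lambda>\<omega>. threshold_time \<sigma>W n m \<omega> \<le> t)"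
    proof (cases t)
      case (enat k)
      show ?thesis
      proof (cases "n \<le> k")
        case True
        have "(\<lambda>\<omega>. threshold_time \<sigma>W n m \<omega> \<le> t) = (\<lambda>\<omega>. \<not> m * n \<le> (\<Sum>i<n. reward \<sigma>W i \<omega>))"
          using True enat by (auto simp: threshold_time_def)
        moreover have [measurable]: "(\<lambda>\<omega>. \<Sum>i<n. reward \<sigma>W i \<omega>) \<in> borel_measurable (reward_filtration \<sigma>W \<mu> \<sigma> t)"
          using borel_measurable_reward_sum[OF True] enat by simp
        moreover have "Measurable.pred (reward_filtration \<sigma>W \<mu> \<sigma> t) (\<lambda>\<omega>. \<not> m * n \<le> (\<Sum>i<n. reward \<sigma>W i \<omega>))"
          by measurable
        ultimately show ?thesis by simp
      next
        case False
        then show ?thesis using enat by (simp add: threshold_time_def)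
      qed
    qed simp
  qed
qed

lemma sum_reward:
  "(\<Sum>i<n. reward \<sigma>W i \<omega>) = n * fst \<omega> + \<sigma>W * sqrt n * normalized_noise_sum n (snd \<omega>)"
  by (cases "n = 0") (simp_all add: reward_def sum.distrib sum_distrib_left[symmetric] normalized_noise_sum_def)

lemma indicator_threshold_minorant:
  fixes lam \<delta> t \<theta> S :: real
  assumes "0 < \<delta>" "0 < t"
  shows "(\<theta> - lam) * indicator {lam + 2 * \<delta><..} \<theta> * indicator {- t..} S - max (lam - \<theta>) 0 * indicator {t<..} S
    \<le> (\<theta> - lam) * (if lam + \<delta> \<le> \<theta> + \<delta> * S / t then 1 else 0)"
proof -
  have "\<delta> * S / t \<le> \<delta>" if "S \<le> t" using that assms by (simp add: field_simps mult_left_mono)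
  moreover have "- \<delta> \<le> \<delta> * S / t" if "- t \<le> S"
    using mult_right_mono[OF that, of \<delta>] assms by (simp add: field_simps)
  ultimately show ?thesis using assms by (auto simp: indicator_def max_def)
qed

lemma discounted_weight_threshold_time:
  assumes \<gamma>: "0 < \<gamma>" "\<gamma> < 1" and sw: "0 < \<sigma>W" and n: "0 < n" and \<delta>: "0 < \<delta>"
  defines "t \<equiv> \<delta> * sqrt n / \<sigma>W"
  shows "discounted_weight \<gamma> (threshold_time \<sigma>W n (lam + \<delta>) \<omega>)
    = (1 - \<gamma> ^ Suc n) / (1 - \<gamma>) + \<gamma> ^ Suc n / (1 - \<gamma>)
      * (if lam + \<delta> \<le> fst \<omega> + \<delta> * normalized_noise_sum n (snd \<omega>) / t then 1 else 0)"
proof -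
  define S where "S = normalized_noise_sum n (snd \<omega>)"
  have "real n = sqrt n * sqrt n" by simp
  then have "\<sigma>W * sqrt n * S = \<delta> * S / t * n"
    unfolding t_def using sw n \<delta> by (simp add: field_simps)
  then have "(\<Sum>i<n. reward \<sigma>W i \<omega>) = (fst \<omega> + \<delta> * S / t) * n"
    unfolding sum_reward S_def[symmetric] by (simp add: algebra_simps)
  then have "(lam + \<delta>) * n \<le> (\<Sum>i<n. reward \<sigma>W i \<omega>) \<longleftrightarrow> lam + \<delta> \<le> fst \<omega> + \<delta> * S / t"
    using n by simp
  then show ?thesis
    unfolding S_def[symmetric] by (cases "lam + \<delta> \<le> fst \<omega> + \<delta> * S / t")
      (simp_all add: threshold_time_def discounted_weight_infinity[OF \<gamma>] discounted_weight_enat[OF \<gamma>]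
        add_divide_distrib[symmetric])
qed

lemma threshold_time_payoff_ge:
  fixes \<omega> :: "real \<times> (nat \<Rightarrow> real)"
  assumes \<gamma>: "0 < \<gamma>" "\<gamma> < 1" and sw: "0 < \<sigma>W" and n: "0 < n" and \<delta>: "0 < \<delta>"
  defines "t \<equiv> \<delta> * sqrt n / \<sigma>W" and "a \<equiv> \<gamma> ^ Suc n" and "S \<equiv> normalized_noise_sum n (snd \<omega>)"
  shows "(fst \<omega> - lam) * ((1 - a) / (1 - \<gamma>)) + a / (1 - \<gamma>)
      * ((fst \<omega> - lam) * indicator {lam + 2 * \<delta><..} (fst \<omega>) * indicator {- t..} S
         - max (lam - fst \<omega>) 0 * indicator {t<..} S)
    \<le> (fst \<omega> - lam) * discounted_weight \<gamma> (threshold_time \<sigma>W n (lam + \<delta>) \<omega>)"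
proof -
  have t: "0 < t" using sw n \<delta> by (simp add: t_def)
  have gain: "a / (1 - \<gamma>) * ((fst \<omega> - lam) * indicator {lam + 2 * \<delta><..} (fst \<omega>) * indicator {- t..} S
         - max (lam - fst \<omega>) 0 * indicator {t<..} S)
      \<le> a / (1 - \<gamma>) * ((fst \<omega> - lam) * (if lam + \<delta> \<le> fst \<omega> + \<delta> * S / t then 1 else 0))"
    using \<gamma> indicator_threshold_minorant[OF \<delta> t] by (intro mult_left_mono) (auto simp: a_def)
  have payoff: "(fst \<omega> - lam) * discounted_weight \<gamma> (threshold_time \<sigma>W n (lam + \<delta>) \<omega>)
      = (fst \<omega> - lam) * ((1 - a) / (1 - \<gamma>))
        + a / (1 - \<gamma>) * ((fst \<omega> - lam) * (if lam + \<delta> \<le> fst \<omega> + \<delta> * S / t then 1 else 0))"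
    unfolding discounted_weight_threshold_time[OF \<gamma> sw n \<delta>] t_def[symmetric] a_def[symmetric] S_def[symmetric]
    by (simp only: distrib_left mult.left_commute[of "fst \<omega> - lam"])
  show ?thesis unfolding payoff by (rule add_left_mono[OF gain])
qed

lemma stop_payoff_threshold_time_ge:
  assumes \<gamma>: "0 < \<gamma>" "\<gamma> < 1" and s: "0 < \<sigma>" and sw: "0 < \<sigma>W" and n: "0 < n" and \<delta>: "0 < \<delta>"
  defines "t \<equiv> \<delta> * sqrt n / \<sigma>W" and "a \<equiv> \<gamma> ^ Suc n"
  shows "((\<mu> - lam) * (1 - a)
      + a * (integral\<^sup>L (normal_measure \<mu> \<sigma>) (\<lambda>x. (x - lam) * indicator {lam + 2 * \<delta><..} x) * Phi t
             - integral\<^sup>L (normal_measure \<mu> \<sigma>) (\<lambda>x. max (lam - x) 0) * std_normal_tail t)) / (1 - \<gamma>)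
    \<le> stop_payoff \<sigma>W \<mu> \<sigma> \<gamma> lam (threshold_time \<sigma>W n (lam + \<delta>))"
proof -
  define h1 where "h1 x = (x - lam) * indicator {lam + 2 * \<delta><..} x" for x :: real
  define h2 where "h2 x = max (lam - x) 0" for x :: real
  define A1 where "A1 = {w \<in> space noise_measure. - t \<le> normalized_noise_sum n w}"
  define A2 where "A2 = {w \<in> space noise_measure. t < normalized_noise_sum n w}"
  have meas[measurable]: "h1 \<in> borel_measurable borel" "h2 \<in> borel_measurable borel"
    "A1 \<in> sets noise_measure" "A2 \<in> sets noise_measure"
    unfolding h1_def h2_def A1_def A2_def normalized_noise_sum_def by measurable
  have "integrable (normal_measure \<mu> \<sigma>) h1" "integrable (normal_measure \<mu> \<sigma>) h2"
    by (rule integrable_normal_measure_affine_bound[OF s, of _ "\<bar>lam\<bar>" 1];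
        auto simp: h1_def h2_def indicator_def max_def)+
  note minorant = has_bochner_integral_bandit_space_combination[where lam=lam
      and p="(1 - a) / (1 - \<gamma>)" and q="a / (1 - \<gamma>)", OF s meas(1,2) this meas(3,4)]
  have "((\<mu> - lam) * (1 - a) + a * (integral\<^sup>L (normal_measure \<mu> \<sigma>) h1 * Phi t
      - integral\<^sup>L (normal_measure \<mu> \<sigma>) h2 * std_normal_tail t)) / (1 - \<gamma>)
    = (\<mu> - lam) * ((1 - a) / (1 - \<gamma>)) + a / (1 - \<gamma>) * (integral\<^sup>L (normal_measure \<mu> \<sigma>) h1 * Phi t
      - integral\<^sup>L (normal_measure \<mu> \<sigma>) h2 * std_normal_tail t)"
    by (simp add: add_divide_distrib)
  also have "\<dots> = integral\<^sup>L (bandit_space \<mu> \<sigma>) (\<lambda>\<omega>. (fst \<omega> - lam) * ((1 - a) / (1 - \<gamma>))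
        + a / (1 - \<gamma>) * (h1 (fst \<omega>) * indicator A1 (snd \<omega>) - h2 (fst \<omega>) * indicator A2 (snd \<omega>)))"
    unfolding has_bochner_integral_integral_eq[OF minorant] using n
    by (simp add: A1_def A2_def measure_normalized_noise_sum_greater measure_normalized_noise_sum_geq)
  also have "\<dots> \<le> (\<integral>\<omega>. (fst \<omega> - lam) * discounted_weight \<gamma> (threshold_time \<sigma>W n (lam + \<delta>) \<omega>) \<partial>bandit_space \<mu> \<sigma>)"
  proof (rule integral_mono[OF integrable.intros[OF minorant]
        integrable_stop_payoff[OF \<gamma> s threshold_time_admissible[OF n]]])
    fix \<omega> assume "\<omega> \<in> space (bandit_space \<mu> \<sigma>)"
    then have "snd \<omega> \<in> space noise_measure" by (auto simp: bandit_space_def space_pair_measure)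
    then have "indicator A1 (snd \<omega>) = (indicator {- t..} (normalized_noise_sum n (snd \<omega>)) :: real)"
      "indicator A2 (snd \<omega>) = (indicator {t<..} (normalized_noise_sum n (snd \<omega>)) :: real)"
      by (simp_all add: A1_def A2_def indicator_def)
    then show "(fst \<omega> - lam) * ((1 - a) / (1 - \<gamma>))
        + a / (1 - \<gamma>) * (h1 (fst \<omega>) * indicator A1 (snd \<omega>) - h2 (fst \<omega>) * indicator A2 (snd \<omega>))
      \<le> (fst \<omega> - lam) * discounted_weight \<gamma> (threshold_time \<sigma>W n (lam + \<delta>) \<omega>)"
      unfolding h1_def h2_def t_def a_def by (simp only: threshold_time_payoff_ge[OF \<gamma> sw n \<delta>])
  qed
  also have "\<dots> = stop_payoff \<sigma>W \<mu> \<sigma> \<gamma> lam (threshold_time \<sigma>W n (lam + \<delta>))"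
    by (rule stop_payoff_eq[OF \<gamma>, symmetric])
  finally show ?thesis unfolding h1_def h2_def .
qed

definition threshold_gain :: "real \<Rightarrow> real \<Rightarrow> real" where
  "threshold_gain \<epsilon> c = std_normal_density (c - \<epsilon>/2) * (\<epsilon>/2) / (2 * c) - (c + 1) * std_normal_density (c + 1)"

lemma threshold_gain_le_1:
  assumes "0 < \<epsilon>" "\<epsilon> \<le> 1" "2 \<le> c"
  shows "threshold_gain \<epsilon> c \<le> 1"
proof -
  have "std_normal_density (c - \<epsilon>/2) * (\<epsilon>/2) \<le> 1"
    using std_normal_density_le_half[of "c - \<epsilon>/2"] assms by (intro mult_le_one) auto
  then have "std_normal_density (c - \<epsilon>/2) * (\<epsilon>/2) / (2 * c) \<le> 1"
    using assms by (simp add: divide_le_eq)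
  moreover have "0 \<le> (c + 1) * std_normal_density (c + 1)" using assms by simp
  ultimately show ?thesis unfolding threshold_gain_def by linarith
qed

lemma threshold_gain_le:
  fixes \<mu> \<sigma> \<epsilon> c t :: real
  assumes s: "0 < \<sigma>" and \<epsilon>: "0 < \<epsilon>" "\<epsilon> \<le> 1" and c: "2 \<le> c" and t: "c + 1 \<le> t"
  defines "lam \<equiv> \<mu> + (c - \<epsilon>) * \<sigma>"
  shows "\<sigma> * threshold_gain \<epsilon> c
    \<le> integral\<^sup>L (normal_measure \<mu> \<sigma>) (\<lambda>x. (x - lam) * indicator {\<mu> + (c - \<epsilon>/2) * \<sigma><..} x) * Phi t
      - integral\<^sup>L (normal_measure \<mu> \<sigma>) (\<lambda>x. max (lam - x) 0) * std_normal_tail t"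
proof -
  have "std_normal_density (c - \<epsilon>/2) * (\<epsilon>/2) / c
      \<le> std_normal_density (c - \<epsilon>/2) * (\<epsilon>/2) / (c - \<epsilon>/2)"
    using \<epsilon> c by (intro divide_left_mono) auto
  also have "\<dots> \<le> std_normal_density (c - \<epsilon>/2) - (c - \<epsilon>) * std_normal_tail (c - \<epsilon>/2)"
    using std_normal_density_minus_tail_ge[of "c - \<epsilon>" "\<epsilon>/2"] \<epsilon> c by simp
  finally have ineq: "std_normal_density (c - \<epsilon>/2) * (\<epsilon>/2) / c
      \<le> std_normal_density (c - \<epsilon>/2) - (c - \<epsilon>) * std_normal_tail (c - \<epsilon>/2)" .
  have E: "integral\<^sup>L (normal_measure \<mu> \<sigma>) (\<lambda>x. (x - lam) * indicator {\<mu> + (c - \<epsilon>/2) * \<sigma><..} x)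
      = \<sigma> * (std_normal_density (c - \<epsilon>/2) - (c - \<epsilon>) * std_normal_tail (c - \<epsilon>/2))"
    unfolding lam_def using integral_normal_measure_excess[OF s, of "c - \<epsilon>/2" \<mu> "c - \<epsilon>"] \<epsilon> c by simp
  have gain: "\<sigma> * (std_normal_density (c - \<epsilon>/2) * (\<epsilon>/2) / c)
      \<le> integral\<^sup>L (normal_measure \<mu> \<sigma>) (\<lambda>x. (x - lam) * indicator {\<mu> + (c - \<epsilon>/2) * \<sigma><..} x)"
    unfolding E by (rule mult_left_mono[OF ineq]) (use s in simp)
  have tail: "std_normal_tail t \<le> std_normal_density (c + 1)"
    using t c by (intro std_normal_tail_le_density) auto
  then have "1/2 \<le> Phi t"
    using Phi_add_std_normal_tail[of t] std_normal_density_le_half[of "c + 1"] by simp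
  then have "\<sigma> * (std_normal_density (c - \<epsilon>/2) * (\<epsilon>/2) / c) * (1/2)
      \<le> integral\<^sup>L (normal_measure \<mu> \<sigma>) (\<lambda>x. (x - lam) * indicator {\<mu> + (c - \<epsilon>/2) * \<sigma><..} x) * Phi t"
  proof (rule mult_mono[OF gain])
    have "0 \<le> \<sigma> * (std_normal_density (c - \<epsilon>/2) * (\<epsilon>/2) / c)" using s \<epsilon> c by simp
    then show "0 \<le> integral\<^sup>L (normal_measure \<mu> \<sigma>) (\<lambda>x. (x - lam) * indicator {\<mu> + (c - \<epsilon>/2) * \<sigma><..} x)"
      using gain by linarith
  qed simp_all
  moreover have "integral\<^sup>L (normal_measure \<mu> \<sigma>) (\<lambda>x. max (lam - x) 0) * std_normal_tail t
      \<le> (\<sigma> * (c + 1)) * std_normal_density (c + 1)"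
  proof (rule mult_mono)
    show "integral\<^sup>L (normal_measure \<mu> \<sigma>) (\<lambda>x. max (lam - x) 0) \<le> \<sigma> * (c + 1)"
      using integral_normal_measure_shortfall_le[OF s, of \<mu> "c - \<epsilon>"] s \<epsilon> c
      unfolding lam_def by (simp add: mult_left_mono order.trans)
  qed (use tail std_normal_tail_nonneg s c in auto)
  ultimately show ?thesis unfolding threshold_gain_def by (simp add: algebra_simps)
qed

lemma exists_nat_sqrt_between:
  fixes x :: real
  assumes "0 \<le> x"
  obtains n :: nat where "0 < n" "x \<le> sqrt n" "real n \<le> x\<^sup>2 + 1"
proof
  let ?n = "max 1 (nat \<lceil>x\<^sup>2\<rceil>)"
  show "0 < ?n" by simp
  have "x\<^sup>2 \<le> real ?n" by linarith
  then show "x \<le> sqrt ?n" using assms real_le_rsqrt by blast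
  have "real (nat \<lceil>x\<^sup>2\<rceil>) \<le> x\<^sup>2 + 1" using of_int_ceiling_le_add_one[of "x\<^sup>2"] by simp
  then show "real ?n \<le> x\<^sup>2 + 1" using zero_le_power2[of x] by (simp add: max_def)
qed

lemma sampling_cost_le_gain:
  assumes \<gamma>: "0 < \<gamma>" "\<gamma> < 1" and c: "2 \<le> c" "Phi c = \<gamma>" and c': "0 \<le> c'" "c' \<le> c"
    and L: "2 * (real n + 1) * std_normal_density c \<le> L" "L \<le> 1"
  shows "c' * (1 - \<gamma> ^ Suc n) \<le> \<gamma> ^ Suc n * L"
proof -
  have "1 - \<gamma> ^ Suc n \<le> (real n + 1) * (1 - \<gamma>)"
    using Bernoulli_inequality[of "\<gamma> - 1" "Suc n"] \<gamma> by (simp add: algebra_simps)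
  also have "\<dots> \<le> (real n + 1) * (std_normal_density c / c)"
    using Phi_add_std_normal_tail[of c] std_normal_tail_le[of c] c by (intro mult_left_mono) auto
  finally have loss: "1 - \<gamma> ^ Suc n \<le> (real n + 1) * std_normal_density c / c" by simp
  have "0 \<le> 1 - \<gamma> ^ Suc n" using power_le_one[of \<gamma> "Suc n"] \<gamma> by simp
  then have "c' * (1 - \<gamma> ^ Suc n) \<le> c * (1 - \<gamma> ^ Suc n)" using c' by (intro mult_right_mono)
  also have "\<dots> \<le> (real n + 1) * std_normal_density c"
    using mult_left_mono[OF loss, of c] c by simp
  also have "\<dots> \<le> L / 2" using L(1) by (simp add: algebra_simps)
  also have "\<dots> \<le> \<gamma> ^ Suc n * L"
  proof -
    have "(real n + 1) * std_normal_density c / c \<le> 1/4" using L c by (simp add: field_simps)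
    then have "1/2 \<le> \<gamma> ^ Suc n" using loss by linarith
    moreover have "0 \<le> 2 * (real n + 1) * std_normal_density c" by simp
    then have "0 \<le> L" using L(1) by linarith
    ultimately have "1/2 * L \<le> \<gamma> ^ Suc n * L" by (rule mult_right_mono)
    then show ?thesis by simp
  qed
  finally show ?thesis .
qed

(* The left-hand side bounds the cost of sampling (4 \<sigma>W (c + 1) / (\<epsilon> \<sigma>))\<^sup>2 rewards. *)
definition large_quantile :: "real \<Rightarrow> real \<Rightarrow> real \<Rightarrow> real \<Rightarrow> bool" where
  "large_quantile \<sigma>W \<sigma> \<epsilon> c \<longleftrightarrow> 2 \<le> c \<and>
     2 * ((4 * \<sigma>W / (\<epsilon> * \<sigma>))\<^sup>2 * (c + 1)\<^sup>2 + 2) * std_normal_density c \<le> threshold_gain \<epsilon> c"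

lemma eventually_large_quantile: "0 < \<epsilon> \<Longrightarrow> eventually (large_quantile \<sigma>W \<sigma> \<epsilon>) at_top"
  unfolding large_quantile_def threshold_gain_def
  by (intro eventually_conj eventually_ge_at_top eventually_std_normal_gain_dominates) simp

lemma threshold_sample_size:
  assumes s: "0 < \<sigma>" and sw: "0 < \<sigma>W" and \<epsilon>: "0 < \<epsilon>" and c: "0 \<le> c"
  obtains n :: nat where "0 < n" "c + 1 \<le> \<epsilon> * \<sigma> / 4 * sqrt n / \<sigma>W"
    "real n + 1 \<le> (4 * \<sigma>W / (\<epsilon> * \<sigma>))\<^sup>2 * (c + 1)\<^sup>2 + 2"
proof -
  define x where "x = 4 * \<sigma>W / (\<epsilon> * \<sigma>) * (c + 1)"
  have "0 \<le> x" using sw \<epsilon> s c by (simp add: x_def)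
  then obtain n where n: "0 < n" "x \<le> sqrt n" "real n \<le> x\<^sup>2 + 1"
    by (rule exists_nat_sqrt_between)
  have "c + 1 = \<epsilon> * \<sigma> / 4 * x / \<sigma>W" using sw \<epsilon> s by (simp add: x_def)
  then have "c + 1 \<le> \<epsilon> * \<sigma> / 4 * sqrt n / \<sigma>W"
    using n(2) sw \<epsilon> s by (simp add: divide_right_mono)
  moreover have "x\<^sup>2 = (4 * \<sigma>W / (\<epsilon> * \<sigma>))\<^sup>2 * (c + 1)\<^sup>2" unfolding x_def by (rule power_mult_distrib)
  ultimately show ?thesis using n that by simp
qed

lemma value_fun_nonneg_below_quantile:
  assumes \<gamma>: "0 < \<gamma>" "\<gamma> < 1" and s: "0 < \<sigma>" and sw: "0 < \<sigma>W" and \<epsilon>: "0 < \<epsilon>" "\<epsilon> \<le> 1"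
    and c: "Phi c = \<gamma>" "large_quantile \<sigma>W \<sigma> \<epsilon> c"
  shows "0 \<le> value_fun \<sigma>W \<gamma> (\<mu> + (c - \<epsilon>) * \<sigma>) \<mu> \<sigma>"
proof -
  have c2: "2 \<le> c" using c(2) by (simp add: large_quantile_def)
  define lam where "lam = \<mu> + (c - \<epsilon>) * \<sigma>"
  define \<delta> where "\<delta> = \<epsilon> * \<sigma> / 4"
  define I1 where "I1 = integral\<^sup>L (normal_measure \<mu> \<sigma>) (\<lambda>x. (x - lam) * indicator {\<mu> + (c - \<epsilon>/2) * \<sigma><..} x)"
  define I2 where "I2 = integral\<^sup>L (normal_measure \<mu> \<sigma>) (\<lambda>x. max (lam - x) 0)"
  have \<delta>: "0 < \<delta>" using \<epsilon> s by (simp add: \<delta>_def)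
  \<comment> \<open>The sample size makes the test threshold \<open>t\<close> exceed \<open>c + 1\<close>, so a bad arm is kept with
    probability at most \<open>std_normal_tail (c + 1)\<close>.\<close>
  have "0 \<le> c" using c2 by simp
  then obtain n where n: "0 < n" "c + 1 \<le> \<delta> * sqrt n / \<sigma>W"
    "real n + 1 \<le> (4 * \<sigma>W / (\<epsilon> * \<sigma>))\<^sup>2 * (c + 1)\<^sup>2 + 2"
    unfolding \<delta>_def by (rule threshold_sample_size[OF s sw \<epsilon>(1)])
  define t where "t = \<delta> * sqrt n / \<sigma>W"
  define a where "a = \<gamma> ^ Suc n"
  have "lam + 2 * \<delta> = \<mu> + (c - \<epsilon>/2) * \<sigma>" by (simp add: lam_def \<delta>_def algebra_simps)
  then have payoff: "((\<mu> - lam) * (1 - a) + a * (I1 * Phi t - I2 * std_normal_tail t)) / (1 - \<gamma>)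
      \<le> stop_payoff \<sigma>W \<mu> \<sigma> \<gamma> lam (threshold_time \<sigma>W n (lam + \<delta>))"
    using stop_payoff_threshold_time_ge[OF \<gamma> s sw n(1) \<delta>, of \<mu> lam]
    unfolding t_def a_def I1_def I2_def by simp
  have gain: "\<sigma> * threshold_gain \<epsilon> c \<le> I1 * Phi t - I2 * std_normal_tail t"
    unfolding I1_def I2_def lam_def using n(2) unfolding t_def[symmetric]
    by (rule threshold_gain_le[OF s \<epsilon> c2])
  have "2 * (real n + 1) * std_normal_density c \<le> threshold_gain \<epsilon> c"
    using mult_right_mono[OF n(3), of "2 * std_normal_density c"] c(2)
    by (simp add: large_quantile_def algebra_simps)
  then have cost: "(c - \<epsilon>) * (1 - a) \<le> a * threshold_gain \<epsilon> c"
    unfolding a_def using \<epsilon> c2 threshold_gain_le_1[OF \<epsilon> c2]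
    by (intro sampling_cost_le_gain[OF \<gamma> c2 c(1)]) auto
  have "\<sigma> * ((c - \<epsilon>) * (1 - a)) \<le> a * (\<sigma> * threshold_gain \<epsilon> c)"
    using mult_left_mono[OF cost, of \<sigma>] s by (simp add: ac_simps)
  also have "\<dots> \<le> a * (I1 * Phi t - I2 * std_normal_tail t)"
    using gain \<gamma> by (intro mult_left_mono) (auto simp: a_def)
  finally have "0 \<le> ((\<mu> - lam) * (1 - a) + a * (I1 * Phi t - I2 * std_normal_tail t)) / (1 - \<gamma>)"
    using \<gamma> by (simp add: lam_def algebra_simps)
  also note payoff
  also have "stop_payoff \<sigma>W \<mu> \<sigma> \<gamma> lam (threshold_time \<sigma>W n (lam + \<delta>)) \<le> value_fun \<sigma>W \<gamma> lam \<mu> \<sigma>"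
    by (rule stop_payoff_le_value_fun[OF threshold_time_admissible[OF n(1)] stop_payoff_le[OF \<gamma> s]])
  finally show ?thesis unfolding lam_def .
qed

lemma gittins_index_near_quantile:
  assumes \<gamma>: "0 < \<gamma>" "\<gamma> < 1" and s: "0 < \<sigma>" and sw: "0 < \<sigma>W" and \<epsilon>: "0 < \<epsilon>" "\<epsilon> \<le> 1"
    and c: "Phi c = \<gamma>" "large_quantile \<sigma>W \<sigma> \<epsilon> c"
  shows "\<mu> + (c - \<epsilon>) * \<sigma> \<le> gittins_index \<sigma>W \<gamma> \<mu> \<sigma>" and "gittins_index \<sigma>W \<gamma> \<mu> \<sigma> \<le> \<mu> + c * \<sigma>"
proof -
  define S where "S = {lam. 0 \<le> value_fun \<sigma>W \<gamma> lam \<mu> \<sigma>}"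
  have low: "\<mu> + (c - \<epsilon>) * \<sigma> \<in> S"
    unfolding S_def using value_fun_nonneg_below_quantile[OF assms] by simp
  have up: "lam \<le> \<mu> + c * \<sigma>" if "lam \<in> S" for lam
  proof (rule ccontr)
    assume "\<not> lam \<le> \<mu> + c * \<sigma>"
    then have "c \<le> (lam - \<mu>) / \<sigma>" using s by (simp add: field_simps)
    moreover have "2 \<le> c" using c(2) by (simp add: large_quantile_def)
    ultimately have "value_fun \<sigma>W \<gamma> (\<mu> + (lam - \<mu>) / \<sigma> * \<sigma>) \<mu> \<sigma> < 0"
      using value_fun_neg_above_quantile[OF \<gamma> s _ c(1)] by blast
    then have "value_fun \<sigma>W \<gamma> lam \<mu> \<sigma> < 0" using s by simp
    then show False using that by (simp add: S_def)
  qed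
  show "\<mu> + (c - \<epsilon>) * \<sigma> \<le> gittins_index \<sigma>W \<gamma> \<mu> \<sigma>"
    unfolding gittins_index_def S_def[symmetric] using up by (intro cSup_upper[OF low] bdd_aboveI) auto
  show "gittins_index \<sigma>W \<gamma> \<mu> \<sigma> \<le> \<mu> + c * \<sigma>"
    unfolding gittins_index_def S_def[symmetric] using low up by (intro cSup_least) auto
qed

theorem theorem1:
  fixes \<sigma>W \<mu> \<sigma> :: real
  assumes "\<sigma>W > 0" and "\<sigma> > 0"
  shows "((\<lambda>\<gamma>. gittins_index \<sigma>W \<gamma> \<mu> \<sigma> - (\<mu> + Phi_inv \<gamma> * \<sigma>)) \<longlongrightarrow> 0) (at_left 1)"
proof (rule tendstoI)
  fix e :: real assume "0 < e"
  define \<epsilon> where "\<epsilon> = min 1 (e / (2 * \<sigma>))"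
  have \<epsilon>: "0 < \<epsilon>" "\<epsilon> \<le> 1" "\<epsilon> * \<sigma> < e"
    using \<open>0 < e\<close> assms by (auto simp: \<epsilon>_def min_def field_simps)
  have "eventually (\<lambda>\<gamma>. large_quantile \<sigma>W \<sigma> \<epsilon> (Phi_inv \<gamma>)) (at_left 1)"
    using eventually_large_quantile[OF \<epsilon>(1)] filterlim_Phi_inv_at_left_1 by (rule eventually_compose_filterlim)
  moreover have "eventually (\<lambda>\<gamma>. 0 < \<gamma> \<and> \<gamma> < 1) (at_left (1::real))"
    by (rule eventually_at_leftI[of 0]) auto
  ultimately show "eventually (\<lambda>\<gamma>. dist (gittins_index \<sigma>W \<gamma> \<mu> \<sigma> - (\<mu> + Phi_inv \<gamma> * \<sigma>)) 0 < e) (at_left 1)"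
  proof eventually_elim
    case (elim \<gamma>)
    then have "Phi (Phi_inv \<gamma>) = \<gamma>" by (intro Phi_Phi_inv) auto
    with elim assms \<epsilon> have "\<mu> + (Phi_inv \<gamma> - \<epsilon>) * \<sigma> \<le> gittins_index \<sigma>W \<gamma> \<mu> \<sigma>"
      "gittins_index \<sigma>W \<gamma> \<mu> \<sigma> \<le> \<mu> + Phi_inv \<gamma> * \<sigma>"
      using gittins_index_near_quantile[of \<gamma> \<sigma> \<sigma>W \<epsilon> "Phi_inv \<gamma>" \<mu>] by auto
    then show ?case using \<epsilon> by (simp add: dist_real_def algebra_simps)
  qed
qed

end
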